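(* Let $|\phi_j\rangle=HX^j|0\rangle$, where $H=\frac{1}{\sqrt d}\sum_{m,n=0}^{d-1}\omega^{mn}|m\rangle\langle n|$ with $\omega=e^{i2\pi/d}$ is the $d$-dimensional Hadamard (Fourier) gate and $X=\sum_{m=0}^{d-1}|m+1\rangle\langle m|$ is the generalized Pauli $X$ gate. For $\Omega=\{(1/k,|\phi_j\rangle)\}_{j=0}^{k-1}$ with $k\le d$, \[ \mathbf{C}_{\mathrm{MIO}}(\Omega)+\mathbf{S}(\Omega)=\log_2 d . \]
   Context: Incoherent states $\mathcal{I}$ are diagonal in the computational basis; MIO are channels mapping $\mathcal{I}$ into itself. Robustness of coherence $C_R(\rho)=\min\{s\ge0:(\rho+s\tau)/(1+s)\in\mathcal{I}\text{ for some state }\tau\}$. Post-discrimination coherence $\mathbf{C}_{\mathrm{MIO}}(\Omega)=\log_2(1+\eta)$, $\eta=\max\sum_j p_jC_R(\sigma_j)$ over MIO channels $\mathcal{N}_{A\to BA'}$ ($\dim B=k$, $A'\cong A$) with $\sigma_j=\mathrm{tr}_B[\mathcal{N}(\rho_j)]$ and $\sum_j p_j\mathrm{tr}[\mathcal{N}(\rho_j)(|j\rangle\langle j|_B\otimes I_{A'})]=P_{\mathrm{suc}}(\Omega)$ (optimal POVM discrimination probability). $\mathbf{S}(\Omega)$ is the von Neumann entropy of the average state $\sum_jp_j|\phi_j\rangle\langle\phi_j|$ (here $\log_2 k$). *)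

theory Defs
  imports "Jordan_Normal_Form.Matrix" "Jordan_Normal_Form.Char_Poly"
    "Jordan_Normal_Form.Schur_Decomposition"
    "HOL-Computational_Algebra.Polynomial"
begin

definition mtrace :: "complex mat \<Rightarrow> complex" where
  "mtrace A = (\<Sum>i<dim_row A. A $$ (i,i))"

fun matsum :: "nat \<Rightarrow> (nat \<Rightarrow> complex mat) \<Rightarrow> nat \<Rightarrow> complex mat" where
  "matsum n f 0 = 0\<^sub>m n n"
| "matsum n f (Suc m) = matsum n f m + f m"

definition psd :: "nat \<Rightarrow> complex mat \<Rightarrow> bool" where
  "psd n A \<longleftrightarrow> A \<in> carrier_mat n n \<and>
     (\<forall>v \<in> carrier_vec n. \<exists>r::real. r \<ge> 0 \<and> conjugate v \<bullet> (A *\<^sub>v v) = complex_of_real r)"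

definition density :: "nat \<Rightarrow> complex mat \<Rightarrow> bool" where
  "density n \<rho> \<longleftrightarrow> psd n \<rho> \<and> mtrace \<rho> = 1"

definition incoherent :: "nat \<Rightarrow> complex mat \<Rightarrow> bool" where
  "incoherent n \<rho> \<longleftrightarrow> density n \<rho> \<and> diagonal_mat \<rho>"

definition ket_bra :: "complex vec \<Rightarrow> complex mat" where
  "ket_bra v = mat (dim_vec v) (dim_vec v) (\<lambda>(i,j). v $ i * cnj (v $ j))"

definition is_channel :: "nat \<Rightarrow> nat \<Rightarrow> complex mat list \<Rightarrow> bool" where
  "is_channel din dout Ks \<longleftrightarrow> (\<forall>K \<in> set Ks. K \<in> carrier_mat dout din) \<and>
     foldr (\<lambda>K acc. mat_adjoint K * K + acc) Ks (0\<^sub>m din din) = 1\<^sub>m din"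

definition apply_channel :: "nat \<Rightarrow> complex mat list \<Rightarrow> complex mat \<Rightarrow> complex mat" where
  "apply_channel dout Ks \<rho> = foldr (\<lambda>K acc. K * \<rho> * mat_adjoint K + acc) Ks (0\<^sub>m dout dout)"

definition is_MIO :: "nat \<Rightarrow> nat \<Rightarrow> complex mat list \<Rightarrow> bool" where
  "is_MIO din dout Ks \<longleftrightarrow> is_channel din dout Ks \<and>
     (\<forall>\<rho>. incoherent din \<rho> \<longrightarrow> incoherent dout (apply_channel dout Ks \<rho>))"

definition robustness :: "nat \<Rightarrow> complex mat \<Rightarrow> real" where
  "robustness n \<rho> = Inf {s::real. s \<ge> 0 \<and> (\<exists>\<tau>. density n \<tau> \<and>
       incoherent n (complex_of_real (1/(1+s)) \<cdot>\<^sub>m (\<rho> + complex_of_real s \<cdot>\<^sub>m \<tau>)))}"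

text \<open>Basis vector |b>_B |a>_A' has index b*d + a.\<close>
definition ptrace_B :: "nat \<Rightarrow> nat \<Rightarrow> complex mat \<Rightarrow> complex mat" where
  "ptrace_B k d M = mat d d (\<lambda>(a1,a2). \<Sum>b<k. M $$ (b*d + a1, b*d + a2))"

text \<open>tr[M (|j><j|_B tensor I_A')]\<close>
definition proj_B_trace :: "nat \<Rightarrow> nat \<Rightarrow> complex mat \<Rightarrow> complex" where
  "proj_B_trace d j M = (\<Sum>a<d. M $$ (j*d + a, j*d + a))"

definition is_POVM :: "nat \<Rightarrow> nat \<Rightarrow> (nat \<Rightarrow> complex mat) \<Rightarrow> bool" where
  "is_POVM d k E \<longleftrightarrow> (\<forall>j<k. psd d (E j)) \<and> matsum d E k = 1\<^sub>m d"

definition P_suc :: "nat \<Rightarrow> nat \<Rightarrow> (nat \<Rightarrow> real) \<Rightarrow> (nat \<Rightarrow> complex mat) \<Rightarrow> real" where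
  "P_suc d k p \<rho> = Sup {(\<Sum>j<k. p j * Re (mtrace (E j * \<rho> j))) | E. is_POVM d k E}"

definition C_MIO :: "nat \<Rightarrow> nat \<Rightarrow> (nat \<Rightarrow> real) \<Rightarrow> (nat \<Rightarrow> complex mat) \<Rightarrow> real" where
  "C_MIO d k p \<rho> = log 2 (1 + Sup {(\<Sum>j<k. p j * robustness d (ptrace_B k d (apply_channel (k*d) Ks (\<rho> j))))
       | Ks. is_MIO d (k*d) Ks \<and>
             (\<Sum>j<k. p j * Re (proj_B_trace d j (apply_channel (k*d) Ks (\<rho> j)))) = P_suc d k p \<rho>})"

text \<open>Eigenvalues counted with algebraic multiplicity as roots of the characteristic polynomial;
  convention 0 log 0 = 0 (automatic since log 2 0 = 0).\<close>
definition vn_entropy :: "complex mat \<Rightarrow> real" where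
  "vn_entropy A = - (\<Sum>z \<in> {z. poly (char_poly A) z = 0}.
        real (order z (char_poly A)) * (Re z * log 2 (Re z)))"

definition omega :: "nat \<Rightarrow> complex" where
  "omega d = cis (2 * pi / real d)"

definition hadamard :: "nat \<Rightarrow> complex mat" where
  "hadamard d = mat d d (\<lambda>(m,n). omega d ^ (m*n) / complex_of_real (sqrt (real d)))"

definition pauliX :: "nat \<Rightarrow> complex mat" where
  "pauliX d = mat d d (\<lambda>(m,n). if m = (n + 1) mod d then 1 else 0)"

definition phi :: "nat \<Rightarrow> nat \<Rightarrow> complex vec" where
  "phi d j = (hadamard d * (pauliX d ^\<^sub>m j)) *\<^sub>v unit_vec d 0"

end

theory Submission
  imports Defs
begin

(* The states H X^j |0> = H |j>, j < k, are k orthonormal Fourier vectors: they are perfectly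
   distinguishable, and their average is 1/k times a rank-k projection, of entropy log k.

   Let Lambda be a maximally incoherent channel that discriminates perfectly. Then Lambda(rho_j) lives
   in block j of B, so sigma_j is the j-th diagonal block of Lambda(rho_j). As I/d is incoherent,
   Lambda(I) is diagonal, and its j-th block is sigma_j + B_j, where B_j >= 0 is the j-th block of
   the image of the d - k Fourier projections not used by the ensemble. Mixing sigma_j with B_j
   therefore yields an incoherent state, so C_R(sigma_j) <= tr B_j = t_j - 1 with t_j the trace of
   block j of Lambda(I). The t_j add up to tr I = d, hence the average robustness is at most
   (d - k)/k.

   The bound is attained by the channel that measures in the Fourier basis and on outcome j < k
   prepares |j>_B (x) ((1 - lam) I/d + lam |+><+|), lam = (d - k)/(k (d - 1)), while the other
   outcomes are spread uniformly over B and over the Fourier states orthogonal to |+>; the weights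
   make it send every incoherent state to I/(kd). Its output states have robustness
   lam (d - 1) = (d - k)/k, as the entry sum of a state bounds its robustness from below.
   Hence C_MIO = log (d/k). *)

lemma sum_list_concat_map: "(\<Sum>x\<leftarrow>concat xss. g x) = (\<Sum>xs\<leftarrow>xss. \<Sum>x\<leftarrow>xs. g x)"
  by (induction xss) auto

lemma sum_list_map_upt: "(\<Sum>i\<leftarrow>[0..<n]. h i) = (\<Sum>i<n. h i)"
  by (induction n) auto

lemma prod_list_map_upt: "(\<Prod>i\<leftarrow>[0..<n]. h i) = (\<Prod>i<n. h i)"
  by (induction n) auto

lemma sum_mult_if_eq:
  assumes "finite S"
  shows "(\<Sum>e\<in>S. f e * (if e = x then 1 else 0)) = (if x \<in> S then f x else (0::'a::semiring_1))"
proof -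
  have eq: "(\<lambda>e. f e * (if e = x then 1 else 0)) = (\<lambda>e. if e = x then f x else 0)" by auto
  show ?thesis unfolding eq using assms by simp
qed

definition qform :: "nat \<Rightarrow> complex mat \<Rightarrow> (nat \<Rightarrow> complex) \<Rightarrow> complex" where
  "qform n A v = (\<Sum>a<n. \<Sum>b<n. cnj (v a) * A $$ (a,b) * v b)"

lemma complex_nonneg_iff_of_real: "(\<exists>r::real. r \<ge> 0 \<and> z = complex_of_real r) \<longleftrightarrow> 0 \<le> z"
proof
  assume "0 \<le> z"
  then have "z = complex_of_real (Re z)" "Re z \<ge> 0" by (auto simp: less_eq_complex_def complex_eq_iff)
  then show "\<exists>r::real. r \<ge> 0 \<and> z = complex_of_real r" by blast
qed (auto simp: less_eq_complex_def)

lemma scalar_prod_conjugate_mult_mat_vec: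
  assumes "A \<in> carrier_mat n n" "v \<in> carrier_vec n"
  shows "conjugate v \<bullet> (A *\<^sub>v v) = qform n A (\<lambda>i. v $ i)"
  using assms unfolding qform_def
  by (auto simp: scalar_prod_def lessThan_atLeast0 sum_distrib_left mult.assoc intro!: sum.cong)

lemma psd_iff_qform: "psd n A \<longleftrightarrow> A \<in> carrier_mat n n \<and> (\<forall>v. 0 \<le> qform n A v)"
proof
  assume p: "psd n A"
  then have A: "A \<in> carrier_mat n n" unfolding psd_def by auto
  have "0 \<le> qform n A v" for v
  proof -
    have "0 \<le> conjugate (vec n v) \<bullet> (A *\<^sub>v vec n v)"
      using p unfolding psd_def complex_nonneg_iff_of_real by simp
    moreover have "qform n A (\<lambda>i. vec n v $ i) = qform n A v" unfolding qform_def by (intro sum.cong) auto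
    ultimately show ?thesis using scalar_prod_conjugate_mult_mat_vec[OF A] by simp
  qed
  then show "A \<in> carrier_mat n n \<and> (\<forall>v. 0 \<le> qform n A v)" using A by auto
next
  assume "A \<in> carrier_mat n n \<and> (\<forall>v. 0 \<le> qform n A v)"
  then show "psd n A" unfolding psd_def complex_nonneg_iff_of_real
    using scalar_prod_conjugate_mult_mat_vec by auto
qed

lemma psd_carrier: "psd n A \<Longrightarrow> A \<in> carrier_mat n n"
  unfolding psd_def by simp

lemma qform_cong: "(\<And>a b. a < n \<Longrightarrow> b < n \<Longrightarrow> A $$ (a,b) = B $$ (a,b)) \<Longrightarrow> qform n A v = qform n B v"
  unfolding qform_def by (intro sum.cong refl) auto

lemma qform_mat_sum:
  "qform n (mat n n (\<lambda>(a,b). \<Sum>i\<in>S. F i a b)) v = (\<Sum>i\<in>S. qform n (mat n n (\<lambda>(a,b). F i a b)) v)"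
proof -
  have "qform n (mat n n (\<lambda>(a,b). \<Sum>i\<in>S. F i a b)) v = (\<Sum>a<n. \<Sum>b<n. \<Sum>i\<in>S. cnj (v a) * F i a b * v b)"
    unfolding qform_def by (intro sum.cong refl) (simp add: sum_distrib_left sum_distrib_right)
  also have "\<dots> = (\<Sum>a<n. \<Sum>i\<in>S. \<Sum>b<n. cnj (v a) * F i a b * v b)" by (intro sum.cong refl sum.swap)
  also have "\<dots> = (\<Sum>i\<in>S. \<Sum>a<n. \<Sum>b<n. cnj (v a) * F i a b * v b)" by (rule sum.swap)
  also have "\<dots> = (\<Sum>i\<in>S. qform n (mat n n (\<lambda>(a,b). F i a b)) v)"
    unfolding qform_def by (intro sum.cong refl) auto
  finally show ?thesis .
qed

lemma qform_unit_vec: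
  assumes "A \<in> carrier_mat n n" "i < n"
  shows "qform n A (\<lambda>l. if l = i then 1 else 0) = A $$ (i,i)"
proof -
  have "qform n A (\<lambda>l. if l = i then 1 else 0) = (\<Sum>a<n. (\<Sum>b<n. A $$ (a,b) * (if b = i then 1 else 0)) * (if a = i then 1 else 0))"
    unfolding qform_def by (intro sum.cong refl) (auto simp: sum_distrib_left sum_distrib_right mult_ac)
  then show ?thesis using assms(2) by (simp add: sum_mult_if_eq)
qed

lemma sum_two_point:
  fixes f :: "nat \<Rightarrow> complex"
  assumes "i < n" "j < n" "i \<noteq> j"
  shows "(\<Sum>b<n. f b * ((if b = i then s else 0) + (if b = j then 1 else 0))) = f i * s + f j"
proof -
  have "(\<Sum>b<n. f b * ((if b = i then s else 0) + (if b = j then 1 else 0))) =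
        (\<Sum>b<n. (if b = i then f i * s else 0)) + (\<Sum>b<n. (if b = j then f j else 0))"
    using assms(3) by (subst sum.distrib[symmetric]) (intro sum.cong refl, auto)
  then show ?thesis using assms by simp
qed

lemma qform_two_point:
  assumes "A \<in> carrier_mat n n" "i < n" "j < n" "i \<noteq> j"
  shows "qform n A (\<lambda>l. (if l = i then s else 0) + (if l = j then 1 else 0)) =
    cnj s * s * A $$ (i,i) + cnj s * A $$ (i,j) + s * A $$ (j,i) + A $$ (j,j)"
proof -
  have "qform n A (\<lambda>l. (if l = i then s else 0) + (if l = j then 1 else 0)) =
     (\<Sum>a<n. (\<Sum>b<n. A $$ (a,b) * ((if b = i then s else 0) + (if b = j then 1 else 0))) *
            ((if a = i then cnj s else 0) + (if a = j then 1 else 0)))"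
    unfolding qform_def by (intro sum.cong refl) (auto simp: sum_distrib_left sum_distrib_right mult_ac)
  also have "\<dots> = (\<Sum>a<n. (A $$ (a,i) * s + A $$ (a,j)) * ((if a = i then cnj s else 0) + (if a = j then 1 else 0)))"
    using assms by (simp add: sum_two_point)
  also have "\<dots> = (A $$ (i,i) * s + A $$ (i,j)) * cnj s + (A $$ (j,i) * s + A $$ (j,j))"
    using assms by (subst sum_two_point) auto
  finally show ?thesis by (simp add: algebra_simps)
qed

lemma psd_diag_nonneg: "psd n A \<Longrightarrow> i < n \<Longrightarrow> 0 \<le> A $$ (i,i)"
  using qform_unit_vec unfolding psd_iff_qform by metis

lemma complex_nonneg_affine_imp_zero:
  assumes "\<And>t::real. 0 \<le> complex_of_real t * z + w"
  shows "z = 0"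
proof -
  have "Im w = 0" using assms[of 0] by (simp add: less_eq_complex_def)
  then have "Im z = 0" using assms[of 1] by (simp add: less_eq_complex_def)
  moreover have "Re z = 0"
  proof (rule ccontr)
    assume "Re z \<noteq> 0"
    then have "0 \<le> Re w - (Re w + 1)"
      using assms[of "- (Re w + 1) / Re z"] by (simp add: less_eq_complex_def)
    then show False by simp
  qed
  ultimately show ?thesis by (simp add: complex_eq_iff)
qed

text \<open>Test the form on \<open>t e\<^sub>i + e\<^sub>j\<close> and \<open>\<i> t e\<^sub>i + e\<^sub>j\<close> for all real \<open>t\<close>.\<close>

lemma psd_zero_diag_imp_zero:
  assumes p: "psd n A" and i: "i < n" and j: "j < n" and z: "A $$ (i,i) = 0"
  shows "A $$ (i,j) = 0 \<and> A $$ (j,i) = 0"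
proof (cases "i = j")
  case True then show ?thesis using z by simp
next
  case False
  have A: "A \<in> carrier_mat n n" using p by (rule psd_carrier)
  have q: "0 \<le> qform n A (\<lambda>l. (if l = i then s else 0) + (if l = j then 1 else 0))" for s
    using p unfolding psd_iff_qform by simp
  have "0 \<le> complex_of_real t * (A $$ (i,j) + A $$ (j,i)) + A $$ (j,j)" for t
    using q[of "complex_of_real t"] unfolding qform_two_point[OF A i j False] z by (simp add: algebra_simps)
  then have sum0: "A $$ (i,j) + A $$ (j,i) = 0" by (rule complex_nonneg_affine_imp_zero)
  have "0 \<le> complex_of_real t * (\<i> * (A $$ (j,i) - A $$ (i,j))) + A $$ (j,j)" for t
    using q[of "\<i> * complex_of_real t"] unfolding qform_two_point[OF A i j False] z by (simp add: algebra_simps)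
  then have "\<i> * (A $$ (j,i) - A $$ (i,j)) = 0" by (rule complex_nonneg_affine_imp_zero)
  with sum0 show ?thesis by auto
qed

lemma mult_cnj_nonneg: "0 \<le> z * cnj z"
  by (simp add: complex_mult_cnj less_eq_complex_def)

lemma psd_gram:
  assumes "finite S"
  shows "psd n (mat n n (\<lambda>(a,b). \<Sum>i\<in>S. w i a * cnj (w i b)))"
proof -
  have eq: "qform n (mat n n (\<lambda>(a,b). w i a * cnj (w i b))) v =
        (\<Sum>a<n. cnj (v a) * w i a) * cnj (\<Sum>b<n. cnj (v b) * w i b)" for i v
    unfolding qform_def by (simp add: sum_distrib_left sum_distrib_right mult_ac)
  have "0 \<le> qform n (mat n n (\<lambda>(a,b). \<Sum>i\<in>S. w i a * cnj (w i b))) v" for v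
    unfolding qform_mat_sum eq by (intro sum_nonneg mult_cnj_nonneg)
  then show ?thesis unfolding psd_iff_qform by simp
qed

lemma psd_diagonal:
  assumes "\<And>a. a < n \<Longrightarrow> 0 \<le> c a"
  shows "psd n (mat n n (\<lambda>(a,b). if a = b then c a else 0))"
proof -
  have "qform n (mat n n (\<lambda>(a,b). if a = b then c a else 0)) v = (\<Sum>a<n. c a * (v a * cnj (v a)))" for v
  proof -
    have "qform n (mat n n (\<lambda>(a,b). if a = b then c a else 0)) v =
          (\<Sum>a<n. \<Sum>b<n. if b = a then c a * (v a * cnj (v a)) else 0)"
      unfolding qform_def by (intro sum.cong refl) (auto simp: mult_ac)
    then show ?thesis by simp
  qed
  then show ?thesis unfolding psd_iff_qform
    using assms by (auto intro!: sum_nonneg mult_nonneg_nonneg[OF _ mult_cnj_nonneg])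
qed

lemma psd_smult:
  assumes "psd n A" "c \<ge> 0"
  shows "psd n (complex_of_real c \<cdot>\<^sub>m A)"
proof -
  have A: "A \<in> carrier_mat n n" using assms(1) by (rule psd_carrier)
  have "qform n (complex_of_real c \<cdot>\<^sub>m A) v = complex_of_real c * qform n A v" for v
    unfolding qform_def using A by (simp add: sum_distrib_left mult_ac)
  then show ?thesis using assms A unfolding psd_iff_qform
    by (auto intro!: mult_nonneg_nonneg simp: less_eq_complex_def)
qed

lemma psd_add:
  assumes "psd n A" "psd n B"
  shows "psd n (A + B)"
proof -
  have A: "A \<in> carrier_mat n n" and B: "B \<in> carrier_mat n n" using assms by (auto dest: psd_carrier)
  have "qform n (A + B) v = qform n A v + qform n B v" for v
    unfolding qform_def using A B by (simp add: algebra_simps sum.distrib)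
  then show ?thesis using assms A B unfolding psd_iff_qform by auto
qed

lemma mtrace_eq_sum: "A \<in> carrier_mat n n \<Longrightarrow> mtrace A = (\<Sum>a<n. A $$ (a,a))"
  unfolding mtrace_def by simp

lemma psd_mtrace_nonneg:
  assumes "psd n A"
  shows "0 \<le> mtrace A"
  using psd_diag_nonneg[OF assms] unfolding mtrace_eq_sum[OF psd_carrier[OF assms]] by (intro sum_nonneg) auto

lemma psd_Re_mtrace_zero_imp_zero:
  assumes B: "psd n B" and tr: "Re (mtrace B) = 0"
  shows "B = 0\<^sub>m n n"
proof -
  have Bc: "B \<in> carrier_mat n n" using B by (rule psd_carrier)
  have diag0: "B $$ (a,a) = 0" if "a < n" for a
  proof -
    have "(\<Sum>a<n. Re (B $$ (a,a))) = 0" using tr by (simp add: mtrace_eq_sum[OF Bc])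
    then have "Re (B $$ (a,a)) = 0"
      using psd_diag_nonneg[OF B] that by (subst (asm) sum_nonneg_eq_0_iff) (auto simp: less_eq_complex_def)
    then show ?thesis using psd_diag_nonneg[OF B that] by (simp add: less_eq_complex_def complex_eq_iff)
  qed
  show ?thesis
  proof (rule eq_matI)
    fix a b assume "a < dim_row (0\<^sub>m n n :: complex mat)" "b < dim_col (0\<^sub>m n n :: complex mat)"
    then have ab: "a < n" "b < n" by auto
    then show "B $$ (a,b) = 0\<^sub>m n n $$ (a,b)" using psd_zero_diag_imp_zero[OF B ab diag0[OF ab(1)]] by simp
  qed (use Bc in auto)
qed

lemma mtrace_add: "A \<in> carrier_mat n n \<Longrightarrow> B \<in> carrier_mat n n \<Longrightarrow> mtrace (A + B) = mtrace A + mtrace B"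
  unfolding mtrace_def by (simp add: sum.distrib)

lemma mtrace_smult: "A \<in> carrier_mat n n \<Longrightarrow> mtrace (c \<cdot>\<^sub>m A) = c * mtrace A"
  unfolding mtrace_def by (auto simp: sum_distrib_left intro!: sum.cong)

lemma density_carrier: "density n \<rho> \<Longrightarrow> \<rho> \<in> carrier_mat n n"
  unfolding density_def psd_def by simp

lemma incoherent_diagonalI:
  assumes "\<And>a. a < n \<Longrightarrow> 0 \<le> c a" "(\<Sum>a<n. c a) = 1"
  shows "incoherent n (mat n n (\<lambda>(a,b). if a = b then c a else 0))"
  using psd_diagonal[OF assms(1)] assms(2)
  unfolding incoherent_def density_def mtrace_def diagonal_mat_def by simp

lemma sum_lessThan_mult_blocks:
  fixes k d :: nat
  shows "(\<Sum>x<k*d. f x) = (\<Sum>j<k. \<Sum>a<d. f (j*d+a))"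
proof -
  have "sum f {j*d..<j*d+d} = (\<Sum>a<d. f (j*d+a))" for j
    using sum.shift_bounds_nat_ivl[of f 0 "j*d" d] by (simp add: lessThan_atLeast0 add.commute)
  then show ?thesis by (simp add: sum.nat_group[symmetric])
qed

lemma sum_block:
  fixes k d j :: nat
  assumes "j < k"
  shows "(\<Sum>x<k*d. if x div d = j then h x else 0) = (\<Sum>a<d. h (j*d+a))"
proof -
  have "(\<Sum>x<k*d. if x div d = j then h x else 0) = (\<Sum>j'<k. if j' = j then (\<Sum>a<d. h (j'*d+a)) else 0)"
    unfolding sum_lessThan_mult_blocks by (intro sum.cong refl) auto
  then show ?thesis using assms by simp
qed

lemma block_index_less:
  fixes j k a d :: nat
  assumes "j < k" "a < d"
  shows "j*d + a < k*d"
proof -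
  have "j*d + a < (j+1)*d" using assms(2) by simp
  also have "\<dots> \<le> k*d" using assms(1) by (intro mult_right_mono) auto
  finally show ?thesis .
qed

definition diag_block :: "nat \<Rightarrow> nat \<Rightarrow> complex mat \<Rightarrow> complex mat" where
  "diag_block d j M = mat d d (\<lambda>(a1,a2). M $$ (j*d+a1, j*d+a2))"

lemma diag_block_carrier[simp]: "diag_block d j M \<in> carrier_mat d d"
  unfolding diag_block_def by simp

lemma dim_diag_block[simp]: "dim_row (diag_block d j M) = d" "dim_col (diag_block d j M) = d"
  unfolding diag_block_def by simp_all

lemma index_diag_block[simp]: "a1 < d \<Longrightarrow> a2 < d \<Longrightarrow> diag_block d j M $$ (a1,a2) = M $$ (j*d+a1, j*d+a2)"
  unfolding diag_block_def by simp

lemma proj_B_trace_eq_mtrace: "proj_B_trace d j M = mtrace (diag_block d j M)"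
  unfolding proj_B_trace_def mtrace_def by (simp add: diag_block_def)

lemma psd_diag_block:
  fixes k d :: nat
  assumes p: "psd (k*d) M" and j: "j < k"
  shows "psd d (diag_block d j M)"
proof -
  have "qform d (diag_block d j M) v = qform (k*d) M (\<lambda>x. if x div d = j then v (x mod d) else 0)" for v
  proof -
    have "qform (k*d) M (\<lambda>x. if x div d = j then v (x mod d) else 0) =
      (\<Sum>x<k*d. if x div d = j then (\<Sum>y<k*d. if y div d = j then cnj (v (x mod d)) * M $$ (x,y) * v (y mod d) else 0) else 0)"
      unfolding qform_def by (intro sum.cong refl) (auto intro!: sum.cong)
    also have "\<dots> = (\<Sum>x<k*d. if x div d = j then (\<Sum>a2<d. cnj (v (x mod d)) * M $$ (x,j*d+a2) * v a2) else 0)"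
      using j by (intro sum.cong refl) (simp add: sum_block)
    also have "\<dots> = (\<Sum>a1<d. \<Sum>a2<d. cnj (v a1) * M $$ (j*d+a1,j*d+a2) * v a2)"
      using j by (simp add: sum_block)
    also have "\<dots> = qform d (diag_block d j M) v"
      unfolding qform_def by (intro sum.cong refl) simp
    finally show ?thesis by (rule sym)
  qed
  then show ?thesis using p unfolding psd_iff_qform by auto
qed

lemma index_mult_mat_sum:
  assumes "A \<in> carrier_mat n m" "B \<in> carrier_mat m p" "i < n" "j < p"
  shows "(A * B) $$ (i,j) = (\<Sum>l<m. A $$ (i,l) * B $$ (l,j))"
  using assms by (auto simp: scalar_prod_def lessThan_atLeast0 intro!: sum.cong)

lemma mat_adjoint_carrier: "K \<in> carrier_mat m d \<Longrightarrow> mat_adjoint K \<in> carrier_mat d m"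
  unfolding mat_adjoint_def by (simp add: mat_of_rows_def)

lemma index_mat_adjoint: "K \<in> carrier_mat m d \<Longrightarrow> i < d \<Longrightarrow> j < m \<Longrightarrow> mat_adjoint K $$ (i,j) = cnj (K $$ (j,i))"
  unfolding mat_adjoint_def by (simp add: mat_of_rows_index)

definition kraus_entry :: "complex mat list \<Rightarrow> nat \<Rightarrow> nat \<Rightarrow> nat \<Rightarrow> (nat \<Rightarrow> nat \<Rightarrow> complex) \<Rightarrow> complex" where
  "kraus_entry Ks d x y F = (\<Sum>K\<leftarrow>Ks. \<Sum>a<d. \<Sum>b<d. K $$ (x,a) * F a b * cnj (K $$ (y,b)))"

lemma index_kraus_conj:
  assumes K: "K \<in> carrier_mat m d" and \<rho>: "\<rho> \<in> carrier_mat d d" and xy: "x < m" "y < m"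
  shows "(K * \<rho> * mat_adjoint K) $$ (x,y) = (\<Sum>a<d. \<Sum>b<d. K $$ (x,a) * \<rho> $$ (a,b) * cnj (K $$ (y,b)))"
proof -
  have "(K * \<rho> * mat_adjoint K) $$ (x,y) = (\<Sum>b<d. (K * \<rho>) $$ (x,b) * mat_adjoint K $$ (b,y))"
    using K \<rho> mat_adjoint_carrier[OF K] xy by (intro index_mult_mat_sum) auto
  also have "\<dots> = (\<Sum>b<d. (\<Sum>a<d. K $$ (x,a) * \<rho> $$ (a,b)) * cnj (K $$ (y,b)))"
    using xy by (intro sum.cong refl) (simp add: index_mult_mat_sum[OF K \<rho>] index_mat_adjoint[OF K])
  also have "\<dots> = (\<Sum>a<d. \<Sum>b<d. K $$ (x,a) * \<rho> $$ (a,b) * cnj (K $$ (y,b)))"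
    by (simp add: sum_distrib_right) (rule sum.swap)
  finally show ?thesis .
qed

lemma apply_channel_carrier_index:
  assumes "\<forall>K\<in>set Ks. K \<in> carrier_mat m d" "\<rho> \<in> carrier_mat d d"
  shows "apply_channel m Ks \<rho> \<in> carrier_mat m m \<and>
    (\<forall>x<m. \<forall>y<m. apply_channel m Ks \<rho> $$ (x,y) = kraus_entry Ks d x y (\<lambda>a b. \<rho> $$ (a,b)))"
  using assms(1)
proof (induction Ks)
  case Nil
  then show ?case by (simp add: apply_channel_def kraus_entry_def)
next
  case (Cons K Ks)
  have K: "K \<in> carrier_mat m d" using Cons.prems by simp
  have "apply_channel m (K # Ks) \<rho> = K * \<rho> * mat_adjoint K + apply_channel m Ks \<rho>"
    unfolding apply_channel_def by simp
  moreover have "K * \<rho> * mat_adjoint K \<in> carrier_mat m m"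
    using K assms(2) mat_adjoint_carrier[OF K] by auto
  ultimately show ?case
    using Cons index_kraus_conj[OF K assms(2)] by (auto simp: kraus_entry_def)
qed

lemma apply_channel_carrier:
  "\<forall>K\<in>set Ks. K \<in> carrier_mat m d \<Longrightarrow> \<rho> \<in> carrier_mat d d \<Longrightarrow> apply_channel m Ks \<rho> \<in> carrier_mat m m"
  using apply_channel_carrier_index by blast

lemma index_apply_channel:
  "\<forall>K\<in>set Ks. K \<in> carrier_mat m d \<Longrightarrow> \<rho> \<in> carrier_mat d d \<Longrightarrow> x < m \<Longrightarrow> y < m \<Longrightarrow>
   apply_channel m Ks \<rho> $$ (x,y) = kraus_entry Ks d x y (\<lambda>a b. \<rho> $$ (a,b))"
  using apply_channel_carrier_index by blast

lemma kraus_entry_cong: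
  "(\<And>a b. a < d \<Longrightarrow> b < d \<Longrightarrow> F a b = F' a b) \<Longrightarrow> kraus_entry Ks d x y F = kraus_entry Ks d x y F'"
  unfolding kraus_entry_def by (intro arg_cong[where f = sum_list] map_cong sum.cong refl) auto

lemma sum_list_sum_swap: "(\<Sum>K\<leftarrow>Ks. \<Sum>a\<in>A. f K a) = (\<Sum>a\<in>A. \<Sum>K\<leftarrow>Ks. f K a)"
  by (induction Ks) (auto simp: sum.distrib)

lemma kraus_entry_sum:
  "kraus_entry Ks d x y (\<lambda>a b. \<Sum>j\<in>S. f j a b) = (\<Sum>j\<in>S. kraus_entry Ks d x y (f j))"
proof -
  have "(\<Sum>a<d. \<Sum>b<d. K $$ (x,a) * (\<Sum>j\<in>S. f j a b) * cnj (K $$ (y,b))) =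
        (\<Sum>j\<in>S. \<Sum>a<d. \<Sum>b<d. K $$ (x,a) * f j a b * cnj (K $$ (y,b)))" for K
  proof -
    have "(\<Sum>a<d. \<Sum>b<d. K $$ (x,a) * (\<Sum>j\<in>S. f j a b) * cnj (K $$ (y,b))) =
          (\<Sum>a<d. \<Sum>j\<in>S. \<Sum>b<d. K $$ (x,a) * f j a b * cnj (K $$ (y,b)))"
      by (simp add: sum_distrib_left sum_distrib_right) (intro sum.cong refl sum.swap)
    then show ?thesis by (simp add: sum.swap[of _ "{..<d}" S])
  qed
  then show ?thesis unfolding kraus_entry_def by (simp add: sum_list_sum_swap)
qed

lemma kraus_entry_smult: "kraus_entry Ks d x y (\<lambda>a b. c * F a b) = c * kraus_entry Ks d x y F"
  unfolding kraus_entry_def by (simp add: sum_distrib_left mult_ac flip: sum_list_const_mult)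

lemma apply_channel_smult:
  assumes K: "\<forall>K\<in>set Ks. K \<in> carrier_mat m d" and \<rho>: "\<rho> \<in> carrier_mat d d"
  shows "apply_channel m Ks (c \<cdot>\<^sub>m \<rho>) = c \<cdot>\<^sub>m apply_channel m Ks \<rho>"
proof (rule eq_matI)
  fix x y assume "x < dim_row (c \<cdot>\<^sub>m apply_channel m Ks \<rho>)" "y < dim_col (c \<cdot>\<^sub>m apply_channel m Ks \<rho>)"
  then have xy: "x < m" "y < m" using apply_channel_carrier[OF K \<rho>] by auto
  have "apply_channel m Ks (c \<cdot>\<^sub>m \<rho>) $$ (x,y) = kraus_entry Ks d x y (\<lambda>a b. c * \<rho> $$ (a,b))"
    unfolding index_apply_channel[OF K smult_carrier_mat[OF \<rho>] xy] by (rule kraus_entry_cong) (use \<rho> in simp)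
  also have "\<dots> = c * apply_channel m Ks \<rho> $$ (x,y)"
    unfolding kraus_entry_smult index_apply_channel[OF K \<rho> xy] ..
  finally show "apply_channel m Ks (c \<cdot>\<^sub>m \<rho>) $$ (x,y) = (c \<cdot>\<^sub>m apply_channel m Ks \<rho>) $$ (x,y)"
    using xy apply_channel_carrier[OF K \<rho>] by simp
qed (use apply_channel_carrier[OF K \<rho>] apply_channel_carrier[OF K smult_carrier_mat[OF \<rho>]] in auto)

lemma index_kraus_sum:
  assumes "\<forall>K\<in>set Ks. K \<in> carrier_mat m d"
  shows "foldr (\<lambda>K acc. mat_adjoint K * K + acc) Ks (0\<^sub>m d d) \<in> carrier_mat d d \<and>
    (\<forall>a<d. \<forall>b<d. foldr (\<lambda>K acc. mat_adjoint K * K + acc) Ks (0\<^sub>m d d) $$ (a,b) =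
       (\<Sum>K\<leftarrow>Ks. \<Sum>x<m. cnj (K $$ (x,a)) * K $$ (x,b)))"
  using assms
proof (induction Ks)
  case (Cons K Ks)
  have K: "K \<in> carrier_mat m d" using Cons.prems by simp
  have "(mat_adjoint K * K) $$ (a,b) = (\<Sum>x<m. cnj (K $$ (x,a)) * K $$ (x,b))" if "a < d" "b < d" for a b
    using K mat_adjoint_carrier[OF K] that by (subst index_mult_mat_sum) (auto simp: index_mat_adjoint)
  then show ?case using Cons K mat_adjoint_carrier[OF K] by auto
qed simp

lemma kraus_completeness:
  assumes "is_channel d m Ks" "a < d" "b < d"
  shows "(\<Sum>K\<leftarrow>Ks. \<Sum>x<m. cnj (K $$ (x,a)) * K $$ (x,b)) = (if a = b then 1 else 0)"
  using assms index_kraus_sum[of Ks m d] unfolding is_channel_def by auto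

lemma qform_kraus_conj:
  "(\<Sum>x<m. \<Sum>y<m. cnj (v x) * (\<Sum>a<d. \<Sum>b<d. K $$ (x,a) * F a b * cnj (K $$ (y,b))) * v y) =
   qform d (mat d d (\<lambda>(a,b). F a b)) (\<lambda>b. \<Sum>y<m. cnj (K $$ (y,b)) * v y)"
proof -
  define T where "T x y a b = cnj (v x) * K $$ (x,a) * F a b * cnj (K $$ (y,b)) * v y" for x y a b
  have "(\<Sum>x<m. \<Sum>y<m. cnj (v x) * (\<Sum>a<d. \<Sum>b<d. K $$ (x,a) * F a b * cnj (K $$ (y,b))) * v y) =
        (\<Sum>x<m. \<Sum>y<m. \<Sum>a<d. \<Sum>b<d. T x y a b)"
    unfolding T_def by (simp add: sum_distrib_left sum_distrib_right mult_ac)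
  also have "\<dots> = (\<Sum>a<d. \<Sum>b<d. \<Sum>x<m. \<Sum>y<m. T x y a b)"
    by (subst sum.swap, subst (2) sum.swap, subst sum.swap) (intro sum.cong refl sum.swap)
  also have "\<dots> = qform d (mat d d (\<lambda>(a,b). F a b)) (\<lambda>b. \<Sum>y<m. cnj (K $$ (y,b)) * v y)"
    unfolding T_def qform_def by (simp add: sum_distrib_left sum_distrib_right mult_ac)
  finally show ?thesis .
qed

lemma psd_apply_channel:
  assumes K: "\<forall>K\<in>set Ks. K \<in> carrier_mat m d" and p: "psd d \<rho>"
  shows "psd m (apply_channel m Ks \<rho>)"
proof -
  have r: "\<rho> \<in> carrier_mat d d" using p by (rule psd_carrier)
  have "qform m (apply_channel m Ks \<rho>) v =
    (\<Sum>K\<leftarrow>Ks. qform d (mat d d (\<lambda>(a,b). \<rho> $$ (a,b))) (\<lambda>b. \<Sum>y<m. cnj (K $$ (y,b)) * v y))" for v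
  proof -
    have "qform m (apply_channel m Ks \<rho>) v = (\<Sum>x<m. \<Sum>y<m. cnj (v x) * kraus_entry Ks d x y (\<lambda>a b. \<rho> $$ (a,b)) * v y)"
      unfolding qform_def using index_apply_channel[OF K r] by (intro sum.cong refl) auto
    then show ?thesis
      unfolding kraus_entry_def qform_kraus_conj[symmetric]
      by (simp add: sum_list_sum_swap sum_distrib_left sum_distrib_right mult_ac flip: sum_list_const_mult sum_list_mult_const)
  qed
  moreover have "mat d d (\<lambda>(a,b). \<rho> $$ (a,b)) = \<rho>" using r by (intro eq_matI) auto
  ultimately have "0 \<le> qform m (apply_channel m Ks \<rho>) v" for v
    using p unfolding psd_iff_qform by (auto intro!: sum_list_nonneg)
  then show ?thesis unfolding psd_iff_qform using apply_channel_carrier[OF K r] by simp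
qed

lemma mtrace_apply_channel:
  assumes c: "is_channel d m Ks" and r: "\<rho> \<in> carrier_mat d d"
  shows "mtrace (apply_channel m Ks \<rho>) = mtrace \<rho>"
proof -
  have K: "\<forall>K\<in>set Ks. K \<in> carrier_mat m d" using c unfolding is_channel_def by simp
  have "mtrace (apply_channel m Ks \<rho>) = (\<Sum>x<m. kraus_entry Ks d x x (\<lambda>a b. \<rho> $$ (a,b)))"
    using index_apply_channel[OF K r] apply_channel_carrier[OF K r] by (simp add: mtrace_eq_sum)
  also have "\<dots> = (\<Sum>K\<leftarrow>Ks. \<Sum>a<d. \<Sum>b<d. \<rho> $$ (a,b) * (\<Sum>x<m. cnj (K $$ (x,b)) * K $$ (x,a)))"
  proof -
    have "(\<Sum>x<m. \<Sum>a<d. \<Sum>b<d. K $$ (x,a) * \<rho> $$ (a,b) * cnj (K $$ (x,b))) =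
          (\<Sum>a<d. \<Sum>b<d. \<rho> $$ (a,b) * (\<Sum>x<m. cnj (K $$ (x,b)) * K $$ (x,a)))" for K :: "complex mat"
      by (subst sum.swap, rule sum.cong[OF refl], subst sum.swap) (simp add: sum_distrib_left mult_ac)
    then show ?thesis unfolding kraus_entry_def sum_list_sum_swap[symmetric] by simp
  qed
  also have "\<dots> = (\<Sum>a<d. \<Sum>b<d. \<rho> $$ (a,b) * (\<Sum>K\<leftarrow>Ks. \<Sum>x<m. cnj (K $$ (x,b)) * K $$ (x,a)))"
    by (simp add: sum_list_sum_swap sum_list_const_mult)
  also have "\<dots> = (\<Sum>a<d. \<Sum>b<d. if b = a then \<rho> $$ (a,a) else 0)"
    using kraus_completeness[OF c] by (intro sum.cong refl) auto
  also have "\<dots> = (\<Sum>a<d. \<rho> $$ (a,a))" by simp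
  also have "\<dots> = mtrace \<rho>" using r by (simp add: mtrace_eq_sum)
  finally show ?thesis .
qed

lemma density_apply_channel:
  assumes "is_channel d m Ks" "density d \<rho>"
  shows "density m (apply_channel m Ks \<rho>)"
proof -
  have "\<forall>K\<in>set Ks. K \<in> carrier_mat m d" using assms(1) unfolding is_channel_def by simp
  then show ?thesis
    using assms psd_apply_channel mtrace_apply_channel[OF assms(1) density_carrier[OF assms(2)]]
    unfolding density_def by simp
qed

definition robustness_feasible :: "nat \<Rightarrow> complex mat \<Rightarrow> real \<Rightarrow> bool" where
  "robustness_feasible n \<rho> s \<longleftrightarrow> s \<ge> 0 \<and> (\<exists>\<tau>. density n \<tau> \<and>
       incoherent n (complex_of_real (1/(1+s)) \<cdot>\<^sub>m (\<rho> + complex_of_real s \<cdot>\<^sub>m \<tau>)))"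

lemma robustness_le: "robustness_feasible n \<rho> s \<Longrightarrow> robustness n \<rho> \<le> s"
  unfolding robustness_def robustness_feasible_def
  by (rule cInf_lower) (auto simp: bdd_below_def)

lemma robustness_ge:
  "robustness_feasible n \<rho> s\<^sub>0 \<Longrightarrow> (\<And>s. robustness_feasible n \<rho> s \<Longrightarrow> c \<le> s) \<Longrightarrow> c \<le> robustness n \<rho>"
  unfolding robustness_def robustness_feasible_def by (rule cInf_greatest) auto

text \<open>Mixing \<open>\<sigma>\<close> with the normalised \<open>B\<close> yields the incoherent state \<open>(\<sigma> + B) / (1 + tr B)\<close>.\<close>

lemma robustness_feasible_diagonal_completion:
  assumes \<sigma>: "density n \<sigma>" and B: "psd n B" and diag: "diagonal_mat (\<sigma> + B)"
  shows "robustness_feasible n \<sigma> (Re (mtrace B))"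
proof -
  define s where "s = Re (mtrace B)"
  have \<sigma>c: "\<sigma> \<in> carrier_mat n n" and Bc: "B \<in> carrier_mat n n"
    using \<sigma> B by (auto dest: density_carrier psd_carrier)
  have "0 \<le> mtrace B" using B by (rule psd_mtrace_nonneg)
  then have trB: "mtrace B = complex_of_real s" and s0: "s \<ge> 0"
    unfolding s_def by (auto simp: less_eq_complex_def complex_eq_iff)
  have inc: "incoherent n (complex_of_real (1/(1+s)) \<cdot>\<^sub>m (\<sigma> + B))"
  proof -
    have "psd n (complex_of_real (1/(1+s)) \<cdot>\<^sub>m (\<sigma> + B))"
      using \<sigma> B s0 unfolding density_def by (intro psd_smult psd_add) auto
    moreover have "mtrace (complex_of_real (1/(1+s)) \<cdot>\<^sub>m (\<sigma> + B)) = 1"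
    proof -
      have "mtrace (\<sigma> + B) = complex_of_real (1 + s)"
        using \<sigma> \<sigma>c Bc trB unfolding density_def by (simp add: mtrace_add)
      moreover have "1 + complex_of_real s \<noteq> 0" using s0 by (auto simp: complex_eq_iff)
      ultimately show ?thesis using \<sigma>c Bc by (simp add: mtrace_smult[of _ n] flip: of_real_mult)
    qed
    moreover have "diagonal_mat (complex_of_real (1/(1+s)) \<cdot>\<^sub>m (\<sigma> + B))"
      using diag \<sigma>c Bc unfolding diagonal_mat_def by simp
    ultimately show ?thesis unfolding incoherent_def density_def by simp
  qed
  obtain \<tau> where "density n \<tau>" "complex_of_real s \<cdot>\<^sub>m \<tau> = B"
  proof (cases "s = 0")
    case True
    then have "B = 0\<^sub>m n n" using psd_Re_mtrace_zero_imp_zero[OF B] unfolding s_def by simp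
    then have "complex_of_real s \<cdot>\<^sub>m \<sigma> = B" using True \<sigma>c Bc by (intro eq_matI) auto
    then show ?thesis using \<sigma> that by blast
  next
    case False
    define \<tau> where "\<tau> = complex_of_real (1/s) \<cdot>\<^sub>m B"
    have "density n \<tau>"
      using psd_smult[OF B, of "1/s"] s0 trB False Bc
      unfolding density_def \<tau>_def by (simp add: mtrace_smult[of _ n] flip: of_real_mult)
    moreover have "complex_of_real s \<cdot>\<^sub>m \<tau> = B"
      using False Bc unfolding \<tau>_def by (intro eq_matI) (auto simp: mult.assoc[symmetric] simp flip: of_real_mult)
    ultimately show ?thesis using that by blast
  qed
  then show ?thesis using inc s0 unfolding robustness_feasible_def s_def by auto
qed

text \<open>If \<open>(\<rho> + s \<tau>) / (1 + s)\<close> is diagonal, the sum of all its entries equals its trace \<open>1\<close>,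
  while the entry sum of \<open>\<tau>\<close> is the nonnegative number \<open>\<langle>1|\<tau>|1\<rangle>\<close>.\<close>

lemma robustness_ge_entry_sum:
  assumes \<rho>: "\<rho> \<in> carrier_mat n n" "mtrace \<rho> = 1" and feasible: "robustness_feasible n \<rho> s\<^sub>0"
  shows "Re (\<Sum>a<n. \<Sum>b<n. \<rho> $$ (a,b)) - 1 \<le> robustness n \<rho>"
proof (rule robustness_ge[OF feasible])
  fix s assume "robustness_feasible n \<rho> s"
  then obtain \<tau> where s0: "s \<ge> 0" and \<tau>: "density n \<tau>"
    and inc: "incoherent n (complex_of_real (1/(1+s)) \<cdot>\<^sub>m (\<rho> + complex_of_real s \<cdot>\<^sub>m \<tau>))"
    unfolding robustness_feasible_def by blast
  have \<tau>c: "\<tau> \<in> carrier_mat n n" using \<tau> by (rule density_carrier)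
  have "1 + complex_of_real s \<noteq> 0" using s0 by (auto simp: complex_eq_iff)
  then have off: "\<rho> $$ (a,b) + complex_of_real s * \<tau> $$ (a,b) = 0" if "a < n" "b < n" "a \<noteq> b" for a b
    using inc that \<rho> \<tau>c unfolding incoherent_def diagonal_mat_def by auto
  have row: "(\<Sum>b<n. \<rho> $$ (a,b) + complex_of_real s * \<tau> $$ (a,b)) = \<rho> $$ (a,a) + complex_of_real s * \<tau> $$ (a,a)"
    if "a < n" for a
  proof -
    have "(\<Sum>b<n. \<rho> $$ (a,b) + complex_of_real s * \<tau> $$ (a,b)) =
          (\<Sum>b<n. if b = a then \<rho> $$ (a,a) + complex_of_real s * \<tau> $$ (a,a) else 0)"
      using off that by (intro sum.cong refl) auto
    then show ?thesis using that by simp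
  qed
  have "(\<Sum>a<n. \<Sum>b<n. \<rho> $$ (a,b)) + complex_of_real s * qform n \<tau> (\<lambda>_. 1) =
        (\<Sum>a<n. \<Sum>b<n. \<rho> $$ (a,b) + complex_of_real s * \<tau> $$ (a,b))"
    unfolding qform_def by (simp add: sum.distrib sum_distrib_left)
  also have "\<dots> = (\<Sum>a<n. \<rho> $$ (a,a) + complex_of_real s * \<tau> $$ (a,a))" using row by simp
  also have "\<dots> = 1 + complex_of_real s"
    using \<rho> \<tau> \<tau>c unfolding density_def by (simp add: sum.distrib mtrace_eq_sum flip: sum_distrib_left)
  finally have "Re ((\<Sum>a<n. \<Sum>b<n. \<rho> $$ (a,b)) + complex_of_real s * qform n \<tau> (\<lambda>_. 1)) =
    Re (1 + complex_of_real s)" by (rule arg_cong)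
  then have "Re (\<Sum>a<n. \<Sum>b<n. \<rho> $$ (a,b)) + s * Re (qform n \<tau> (\<lambda>_. 1)) = 1 + s" by simp
  moreover have "0 \<le> s * Re (qform n \<tau> (\<lambda>_. 1))"
    using \<tau> s0 unfolding density_def psd_iff_qform by (simp add: less_eq_complex_def)
  ultimately show "Re (\<Sum>a<n. \<Sum>b<n. \<rho> $$ (a,b)) - 1 \<le> s" by linarith
qed

section \<open>The Fourier basis\<close>

lemma omega_pow: "omega d ^ n = cis (2 * pi * real n / real d)"
  unfolding omega_def DeMoivre by (simp add: field_simps)

lemma cis_2pi_diff_ne_one:
  assumes "a < d" "b < d" "a \<noteq> b"
  shows "cis (2 * pi * (real a - real b) / real d) \<noteq> 1"
proof
  assume "cis (2 * pi * (real a - real b) / real d) = 1"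
  then have "cos (2 * pi * (real a - real b) / real d) = 1" by (metis cis.sel(1) one_complex.sel(1))
  then obtain n :: int where "2 * pi * (real a - real b) / real d = real_of_int n * 2 * pi"
    using cos_one_2pi_int by blast
  then have "2 * pi * (real a - real b) = 2 * pi * (real_of_int n * real d)"
    using assms(1) by (simp add: field_simps)
  then have "real a - real b = real_of_int n * real d" using pi_gt_zero by simp
  then have e: "int a - int b = n * int d" by (metis of_int_eq_iff of_int_diff of_int_mult of_int_of_nat_eq)
  then have "n \<noteq> 0" using assms(3) by auto
  then have "\<bar>n * int d\<bar> \<ge> int d" using assms(1) by (simp add: abs_mult mult_le_cancel_right1)
  with e assms show False by linarith
qed

lemma sum_omega_pow_mult_cnj:
  assumes "a < d" "b < d"
  shows "(\<Sum>i<d. omega d ^ (a*i) * cnj (omega d ^ (b*i))) = (if a = b then of_nat d else 0)"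
proof (cases "a = b")
  case True
  have "omega d ^ (a*i) * cnj (omega d ^ (a*i)) = 1" for i
    unfolding omega_pow cis_cnj by (simp add: cis_mult)
  then show ?thesis using True by simp
next
  case False
  define z where "z = cis (2 * pi * (real a - real b) / real d)"
  have d0: "d > 0" using assms by simp
  have "omega d ^ (a*i) * cnj (omega d ^ (b*i)) = z ^ i" for i
    unfolding omega_pow cis_cnj cis_mult z_def DeMoivre
    by (rule arg_cong[where f=cis]) (use d0 in \<open>simp add: field_simps\<close>)
  then have "(\<Sum>i<d. omega d ^ (a*i) * cnj (omega d ^ (b*i))) = (\<Sum>i<d. z ^ i)" by simp
  moreover have "z ^ d = 1"
  proof -
    have "real d * (2 * pi * (real a - real b) / real d) = 2 * pi * real_of_int (int a - int b)"
      using d0 by (simp add: field_simps)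
    then show ?thesis unfolding z_def DeMoivre by (simp only: cis_multiple_2pi Ints_of_int)
  qed
  moreover have "z \<noteq> 1" unfolding z_def using assms False by (rule cis_2pi_diff_ne_one)
  ultimately show ?thesis using False by (simp add: geometric_sum)
qed

text \<open>\<open>fourier_vec d m a\<close> is the \<open>a\<close>-th coordinate of \<open>H|m\<rangle>\<close>.\<close>

definition fourier_vec :: "nat \<Rightarrow> nat \<Rightarrow> nat \<Rightarrow> complex" where
  "fourier_vec d m a = omega d ^ (a*m) / complex_of_real (sqrt (real d))"

lemma sqrt_mult_cnj: "complex_of_real (sqrt (real d)) * cnj (complex_of_real (sqrt (real d))) = of_nat d"
  by (simp flip: of_real_mult)

lemma fourier_vec_complete:
  assumes "a < d" "b < d"
  shows "(\<Sum>m<d. fourier_vec d m a * cnj (fourier_vec d m b)) = (if a = b then 1 else 0)"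
proof -
  have "(\<Sum>m<d. fourier_vec d m a * cnj (fourier_vec d m b)) =
     (\<Sum>m<d. omega d ^ (a*m) * cnj (omega d ^ (b*m))) / (complex_of_real (sqrt (real d)) * cnj (complex_of_real (sqrt (real d))))"
    unfolding fourier_vec_def by (simp add: sum_divide_distrib)
  then show ?thesis unfolding sum_omega_pow_mult_cnj[OF assms] sqrt_mult_cnj using assms by auto
qed

lemma fourier_vec_orthonormal:
  assumes "i < d" "j < d"
  shows "(\<Sum>a<d. fourier_vec d i a * cnj (fourier_vec d j a)) = (if i = j then 1 else 0)"
proof -
  have "(\<Sum>a<d. fourier_vec d i a * cnj (fourier_vec d j a)) =
     (\<Sum>a<d. omega d ^ (i*a) * cnj (omega d ^ (j*a))) / (complex_of_real (sqrt (real d)) * cnj (complex_of_real (sqrt (real d))))"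
    unfolding fourier_vec_def by (simp add: sum_divide_distrib mult.commute)
  then show ?thesis unfolding sum_omega_pow_mult_cnj[OF assms] sqrt_mult_cnj using assms by auto
qed

lemma fourier_vec_mult_cnj: "fourier_vec d m a * cnj (fourier_vec d m a) = 1 / of_nat d"
proof -
  have "omega d ^ (a*m) * cnj (omega d ^ (a*m)) = 1"
    unfolding omega_pow cis_cnj by (simp add: cis_mult)
  then show ?thesis unfolding fourier_vec_def using sqrt_mult_cnj[of d] by (simp add: field_simps)
qed

lemma fourier_vec_0_mult_cnj: "fourier_vec d 0 a * cnj (fourier_vec d 0 b) = 1 / of_nat d"
  using fourier_vec_mult_cnj[of d 0 a] by (simp add: fourier_vec_def)

lemma hadamard_carrier: "hadamard d \<in> carrier_mat d d"
  unfolding hadamard_def by simp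

lemma index_hadamard: "a < d \<Longrightarrow> m < d \<Longrightarrow> hadamard d $$ (a,m) = fourier_vec d m a"
  unfolding hadamard_def fourier_vec_def by (simp add: mult.commute)

lemma index_hadamard_adjoint:
  "m < d \<Longrightarrow> b < d \<Longrightarrow> mat_adjoint (hadamard d) $$ (m,b) = cnj (fourier_vec d m b)"
  by (simp add: index_mat_adjoint[OF hadamard_carrier] index_hadamard)

lemma hadamard_mult_adjoint: "hadamard d * mat_adjoint (hadamard d) = 1\<^sub>m d"
proof (rule eq_matI)
  fix i j assume "i < dim_row (1\<^sub>m d)" "j < dim_col (1\<^sub>m d)"
  then have ij: "i < d" "j < d" by auto
  have "(hadamard d * mat_adjoint (hadamard d)) $$ (i,j) = (\<Sum>m<d. fourier_vec d m i * cnj (fourier_vec d m j))"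
    using ij by (subst index_mult_mat_sum[OF hadamard_carrier mat_adjoint_carrier[OF hadamard_carrier]])
      (auto simp: index_hadamard index_hadamard_adjoint)
  then show "(hadamard d * mat_adjoint (hadamard d)) $$ (i,j) = 1\<^sub>m d $$ (i,j)"
    using ij by (simp add: fourier_vec_complete)
qed (use hadamard_carrier mat_adjoint_carrier[OF hadamard_carrier] in auto)

lemma adjoint_mult_hadamard: "mat_adjoint (hadamard d) * hadamard d = 1\<^sub>m d"
proof (rule eq_matI)
  fix i j assume "i < dim_row (1\<^sub>m d)" "j < dim_col (1\<^sub>m d)"
  then have ij: "i < d" "j < d" by auto
  have "(mat_adjoint (hadamard d) * hadamard d) $$ (i,j) = (\<Sum>a<d. fourier_vec d j a * cnj (fourier_vec d i a))"
    using ij by (subst index_mult_mat_sum[OF mat_adjoint_carrier[OF hadamard_carrier] hadamard_carrier])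
      (auto simp: index_hadamard index_hadamard_adjoint mult.commute)
  then show "(mat_adjoint (hadamard d) * hadamard d) $$ (i,j) = 1\<^sub>m d $$ (i,j)"
    using ij by (simp add: fourier_vec_orthonormal)
qed (use hadamard_carrier mat_adjoint_carrier[OF hadamard_carrier] in auto)

lemma qform_incoherent_fourier_vec:
  assumes "incoherent d \<rho>"
  shows "qform d \<rho> (fourier_vec d i) = 1 / of_nat d"
proof -
  have \<rho>c: "\<rho> \<in> carrier_mat d d" and dg: "diagonal_mat \<rho>" and tr: "mtrace \<rho> = 1"
    using assms unfolding incoherent_def density_def psd_def by auto
  have "qform d \<rho> (fourier_vec d i) = (\<Sum>a<d. \<Sum>b<d. if b = a then \<rho> $$ (a,a) * (fourier_vec d i a * cnj (fourier_vec d i a)) else 0)"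
    unfolding qform_def using \<rho>c dg unfolding diagonal_mat_def by (intro sum.cong refl) (auto simp: mult_ac)
  also have "\<dots> = mtrace \<rho> / of_nat d"
    using \<rho>c by (simp add: fourier_vec_mult_cnj mtrace_eq_sum sum_divide_distrib)
  finally show ?thesis using tr by simp
qed

definition fourier_proj :: "nat \<Rightarrow> nat set \<Rightarrow> complex mat" where
  "fourier_proj d S = mat d d (\<lambda>(a,b). \<Sum>i\<in>S. fourier_vec d i a * cnj (fourier_vec d i b))"

lemma fourier_proj_carrier[simp]: "fourier_proj d S \<in> carrier_mat d d"
  unfolding fourier_proj_def by simp

lemma psd_fourier_proj: "finite S \<Longrightarrow> psd d (fourier_proj d S)"
  unfolding fourier_proj_def by (rule psd_gram)

lemma fourier_proj_lessThan: "fourier_proj d {..<d} = 1\<^sub>m d"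
  unfolding fourier_proj_def by (rule eq_matI) (auto simp: fourier_vec_complete)

lemma qform_fourier_proj:
  assumes "S \<subseteq> {..<d}" "j < d"
  shows "qform d (fourier_proj d S) (fourier_vec d j) = (if j \<in> S then 1 else 0)"
proof -
  have "qform d (mat d d (\<lambda>(a,b). fourier_vec d i a * cnj (fourier_vec d i b))) (fourier_vec d j) =
        (if i = j then 1 else 0)" if "i \<in> S" for i
  proof -
    have i: "i < d" using that assms by auto
    have "qform d (mat d d (\<lambda>(a,b). fourier_vec d i a * cnj (fourier_vec d i b))) (fourier_vec d j) =
        (\<Sum>a<d. fourier_vec d i a * cnj (fourier_vec d j a)) * cnj (\<Sum>b<d. fourier_vec d i b * cnj (fourier_vec d j b))"
      unfolding qform_def by (simp add: sum_distrib_left sum_distrib_right mult_ac) (rule sum.swap)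
    then show ?thesis using fourier_vec_orthonormal[OF i assms(2)] by simp
  qed
  moreover have "finite S" using assms(1) finite_subset by blast
  ultimately show ?thesis unfolding fourier_proj_def qform_mat_sum using assms by (simp cong: sum.cong)
qed

lemma mtrace_fourier_proj_single: "j < d \<Longrightarrow> mtrace (fourier_proj d {j}) = 1"
  unfolding mtrace_def fourier_proj_def using fourier_vec_orthonormal[of j d j] by simp

lemma density_fourier_proj_single: "j < d \<Longrightarrow> density d (fourier_proj d {j})"
  unfolding density_def using psd_fourier_proj mtrace_fourier_proj_single by simp

lemma mtrace_mult_fourier_proj_single:
  assumes "E \<in> carrier_mat d d"
  shows "mtrace (E * fourier_proj d {j}) = qform d E (fourier_vec d j)"
proof -
  have "mtrace (E * fourier_proj d {j}) = (\<Sum>a<d. (E * fourier_proj d {j}) $$ (a,a))"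
    using assms by (intro mtrace_eq_sum) auto
  also have "\<dots> = (\<Sum>a<d. \<Sum>b<d. E $$ (a,b) * (fourier_vec d j b * cnj (fourier_vec d j a)))"
    by (intro sum.cong refl, subst index_mult_mat_sum[OF assms fourier_proj_carrier]) (auto simp: fourier_proj_def)
  also have "\<dots> = qform d E (fourier_vec d j)" unfolding qform_def by (intro sum.cong refl) (simp add: mult_ac)
  finally show ?thesis .
qed

lemma pauliX_pow:
  "pauliX d ^\<^sub>m j \<in> carrier_mat d d \<and>
   (\<forall>b<d. \<forall>c<d. (pauliX d ^\<^sub>m j) $$ (b,c) = (if b = (c + j) mod d then 1 else 0))"
proof (induction j)
  case 0
  then show ?case by (auto simp: pauliX_def)
next
  case (Suc j)
  have X: "pauliX d \<in> carrier_mat d d" by (simp add: pauliX_def)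
  have "(pauliX d ^\<^sub>m Suc j) $$ (b,c) = (if b = (c + Suc j) mod d then 1 else 0)" if "b < d" "c < d" for b c
  proof -
    have "(pauliX d ^\<^sub>m Suc j) $$ (b,c) = (\<Sum>e<d. (pauliX d ^\<^sub>m j) $$ (b,e) * pauliX d $$ (e,c))"
      using Suc.IH X that by (simp add: scalar_prod_def lessThan_atLeast0)
    also have "\<dots> = (\<Sum>e<d. if e = (c+1) mod d then (if b = (e + j) mod d then 1 else 0) else 0)"
      using Suc.IH that by (intro sum.cong) (auto simp: pauliX_def)
    also have "\<dots> = (if b = ((c+1) mod d + j) mod d then 1 else 0)"
      using that by simp
    also have "((c+1) mod d + j) mod d = (c + Suc j) mod d" by (simp add: mod_add_left_eq)
    finally show ?thesis .
  qed
  then show ?case using Suc.IH X by auto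
qed

lemma index_mult_mat_vec_sum:
  assumes "A \<in> carrier_mat n m" "dim_vec v = m" "i < n"
  shows "(A *\<^sub>v v) $ i = (\<Sum>l<m. A $$ (i,l) * v $ l)"
  using assms by (auto simp: scalar_prod_def lessThan_atLeast0 intro!: sum.cong)

lemma dim_phi: "dim_vec (phi d j) = d"
  by (simp add: phi_def hadamard_def)

lemma index_phi:
  assumes "a < d" "j < d"
  shows "phi d j $ a = fourier_vec d j a"
proof -
  have P: "pauliX d ^\<^sub>m j \<in> carrier_mat d d" using pauliX_pow by blast
  have H: "hadamard d \<in> carrier_mat d d" by (rule hadamard_carrier)
  have "phi d j $ a = (\<Sum>c<d. (hadamard d * (pauliX d ^\<^sub>m j)) $$ (a,c) * unit_vec d 0 $ c)"
    unfolding phi_def using assms P H by (subst index_mult_mat_vec_sum) auto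
  also have "\<dots> = (\<Sum>c<d. (hadamard d * (pauliX d ^\<^sub>m j)) $$ (a,c) * (if c = 0 then 1 else 0))"
    by (intro sum.cong) auto
  also have "\<dots> = (hadamard d * (pauliX d ^\<^sub>m j)) $$ (a,0)"
    using assms by (subst sum_mult_if_eq) auto
  also have "\<dots> = (\<Sum>b<d. hadamard d $$ (a,b) * (pauliX d ^\<^sub>m j) $$ (b,0))"
    using assms P H by (subst index_mult_mat_sum) auto
  also have "\<dots> = (\<Sum>b<d. hadamard d $$ (a,b) * (if b = j then 1 else 0))"
    using assms pauliX_pow by (intro sum.cong) auto
  also have "\<dots> = fourier_vec d j a"
    using assms by (subst sum_mult_if_eq) (auto simp: index_hadamard)
  finally show ?thesis .
qed

lemma ket_bra_phi: "j < d \<Longrightarrow> ket_bra (phi d j) = fourier_proj d {j}"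
  unfolding ket_bra_def fourier_proj_def dim_phi by (rule eq_matI) (auto simp: index_phi)

lemma matsum_eq_mat:
  assumes "\<And>i. i < n \<Longrightarrow> f i \<in> carrier_mat d d"
  shows "matsum d f n = mat d d (\<lambda>(a,b). \<Sum>i<n. f i $$ (a,b))"
  using assms
proof (induction n)
  case (Suc n)
  have "f n \<in> carrier_mat d d" using Suc.prems by simp
  moreover have "matsum d f n = mat d d (\<lambda>(a,b). \<Sum>i<n. f i $$ (a,b))" by (rule Suc.IH) (use Suc.prems in simp)
  ultimately show ?case by auto
qed auto

lemma POVM_success_le_one:
  assumes P: "is_POVM d k E" and j: "j < k" "j < d"
  shows "Re (mtrace (E j * fourier_proj d {j})) \<le> 1"
proof -
  have Ec: "E i \<in> carrier_mat d d" if "i < k" for i using P that unfolding is_POVM_def psd_def by simp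
  have E0: "0 \<le> qform d (E i) v" if "i < k" for i v using P that unfolding is_POVM_def psd_iff_qform by simp
  have "1 = qform d (fourier_proj d {..<d}) (fourier_vec d j)" using j by (simp add: qform_fourier_proj)
  also have "\<dots> = qform d (mat d d (\<lambda>(a,b). \<Sum>i<k. E i $$ (a,b))) (fourier_vec d j)"
    using P Ec unfolding is_POVM_def fourier_proj_lessThan by (simp add: matsum_eq_mat)
  also have "\<dots> = (\<Sum>i<k. qform d (E i) (fourier_vec d j))"
    unfolding qform_mat_sum using Ec by (intro sum.cong refl qform_cong) auto
  finally have "1 = Re (\<Sum>i<k. qform d (E i) (fourier_vec d j))" by (metis one_complex.sel(1))
  also have "\<dots> = (\<Sum>i<k. Re (qform d (E i) (fourier_vec d j)))" by (simp add: Re_sum)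
  also have "\<dots> \<ge> Re (qform d (E j) (fourier_vec d j))"
    using E0 j by (intro member_le_sum) (auto simp: less_eq_complex_def)
  finally show ?thesis using mtrace_mult_fourier_proj_single[OF Ec[OF j(1)]] by simp
qed

text \<open>The last outcome also collects the Fourier directions \<open>k, \<dots>, d - 1\<close> carrying no state.\<close>

definition fourier_povm :: "nat \<Rightarrow> nat \<Rightarrow> nat \<Rightarrow> complex mat" where
  "fourier_povm d k j = fourier_proj d (if j = k - 1 then {k-1..<d} else {j})"

lemma is_POVM_fourier_povm:
  assumes "1 \<le> k" "k \<le> d"
  shows "is_POVM d k (fourier_povm d k)"
proof -
  obtain k' where k': "k = Suc k'" using assms(1) by (cases k) auto
  have "(\<Sum>j<k. \<Sum>i\<in>(if j = k - 1 then {k-1..<d} else {j}). f i) = (\<Sum>i<d. f i)" for f :: "nat \<Rightarrow> complex"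
  proof -
    have "(\<Sum>j<k'. \<Sum>i\<in>(if j = k' then {k'..<d} else {j}). f i) = (\<Sum>j<k'. f j)" by (intro sum.cong) auto
    then have "(\<Sum>j<k. \<Sum>i\<in>(if j = k - 1 then {k-1..<d} else {j}). f i) = (\<Sum>j<k'. f j) + (\<Sum>i\<in>{k'..<d}. f i)"
      unfolding k' by simp
    also have "\<dots> = (\<Sum>i<d. f i)"
      using assms k' by (simp add: lessThan_atLeast0 sum.atLeastLessThan_concat)
    finally show ?thesis .
  qed
  then have "matsum d (fourier_povm d k) k = fourier_proj d {..<d}"
    unfolding fourier_povm_def by (subst matsum_eq_mat) (auto simp: fourier_proj_def intro!: eq_matI)
  then show ?thesis
    unfolding is_POVM_def fourier_povm_def fourier_proj_lessThan by (auto intro!: psd_fourier_proj)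
qed

lemma mtrace_fourier_povm:
  assumes "j < k" "k \<le> d"
  shows "mtrace (fourier_povm d k j * fourier_proj d {j}) = 1"
proof -
  define S where "S = (if j = k - 1 then {k-1..<d} else {j})"
  have "S \<subseteq> {..<d}" "j \<in> S" using assms unfolding S_def by auto
  then show ?thesis
    using assms unfolding fourier_povm_def S_def[symmetric]
    by (simp add: mtrace_mult_fourier_proj_single qform_fourier_proj)
qed

lemma P_suc_fourier_states:
  assumes "1 \<le> k" "k \<le> d"
  shows "P_suc d k (\<lambda>_. 1 / real k) (\<lambda>j. ket_bra (phi d j)) = 1"
proof -
  have eq: "(\<Sum>j<k. 1 / real k * Re (mtrace (E j * ket_bra (phi d j)))) =
            (\<Sum>j<k. 1 / real k * Re (mtrace (E j * fourier_proj d {j})))" for E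
    using assms by (intro sum.cong refl) (simp add: ket_bra_phi)
  show ?thesis unfolding P_suc_def eq
  proof (rule cSup_eq_maximum)
    have "(\<Sum>j<k. 1 / real k * Re (mtrace (fourier_povm d k j * fourier_proj d {j}))) = 1"
      using mtrace_fourier_povm[OF _ assms(2)] assms by simp
    then show "1 \<in> {\<Sum>j<k. 1 / real k * Re (mtrace (E j * fourier_proj d {j})) |E. is_POVM d k E}"
      using is_POVM_fourier_povm[OF assms] by force
  next
    fix x assume "x \<in> {\<Sum>j<k. 1 / real k * Re (mtrace (E j * fourier_proj d {j})) |E. is_POVM d k E}"
    then obtain E where E: "is_POVM d k E" and x: "x = (\<Sum>j<k. 1 / real k * Re (mtrace (E j * fourier_proj d {j})))"
      by blast
    have "x \<le> (\<Sum>j<k. 1 / real k * 1)" unfolding x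
      using POVM_success_le_one[OF E] assms by (intro sum_mono mult_left_mono) auto
    then show "x \<le> 1" using assms by simp
  qed
qed

section \<open>Upper bound: maximally incoherent channels that discriminate perfectly\<close>

lemma sum_proj_B_trace:
  assumes "M \<in> carrier_mat (k*d) (k*d)"
  shows "(\<Sum>j<k. proj_B_trace d j M) = mtrace M"
  using assms unfolding proj_B_trace_def by (simp add: mtrace_eq_sum sum_lessThan_mult_blocks)

lemma Re_mtrace_split_block:
  assumes "M \<in> carrier_mat (k*d) (k*d)" "j < k"
  shows "Re (mtrace M) = Re (proj_B_trace d j M) + (\<Sum>x<k*d. if x div d = j then 0 else Re (M $$ (x,x)))"
proof -
  have "Re (mtrace M) = (\<Sum>x<k*d. Re (M $$ (x,x)))"
    using assms by (simp add: mtrace_eq_sum Re_sum)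
  also have "\<dots> = (\<Sum>x<k*d. (if x div d = j then Re (M $$ (x,x)) else 0) +
                                  (if x div d = j then 0 else Re (M $$ (x,x))))"
    by (intro sum.cong) auto
  also have "\<dots> = (\<Sum>x<k*d. if x div d = j then Re (M $$ (x,x)) else 0) +
                   (\<Sum>x<k*d. if x div d = j then 0 else Re (M $$ (x,x)))"
    by (rule sum.distrib)
  also have "(\<Sum>x<k*d. if x div d = j then Re (M $$ (x,x)) else 0) = Re (proj_B_trace d j M)"
    using assms(2) by (simp add: sum_block proj_B_trace_def Re_sum)
  finally show ?thesis .
qed

lemma proj_B_trace_le_one:
  assumes "density (k*d) M" "j < k"
  shows "Re (proj_B_trace d j M) \<le> 1"
proof -
  have "0 \<le> (\<Sum>x<k*d. if x div d = j then 0 else Re (M $$ (x,x)))"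
    using psd_diag_nonneg assms unfolding density_def by (intro sum_nonneg) (auto simp: less_eq_complex_def)
  then show ?thesis using Re_mtrace_split_block[OF density_carrier[OF assms(1)] assms(2)] assms(1)
    unfolding density_def by simp
qed

lemma density_concentrated_on_block:
  assumes M: "density (k*d) M" and j: "j < k" and full: "Re (proj_B_trace d j M) = 1"
    and xy: "x < k*d" "y < k*d" and x: "x div d \<noteq> j"
  shows "M $$ (x,y) = 0 \<and> M $$ (y,x) = 0"
proof -
  have Mc: "M \<in> carrier_mat (k*d) (k*d)" using M by (rule density_carrier)
  have p: "psd (k*d) M" and tr: "mtrace M = 1" using M unfolding density_def by auto
  have nonneg: "\<And>z. z \<in> {..<k*d} \<Longrightarrow> 0 \<le> (if z div d = j then 0 else Re (M $$ (z,z)))"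
    using psd_diag_nonneg[OF p] by (auto simp: less_eq_complex_def)
  have "(\<Sum>z<k*d. if z div d = j then 0 else Re (M $$ (z,z))) = 0"
    using Re_mtrace_split_block[OF Mc j] full tr by simp
  then have all0: "\<forall>z\<in>{..<k*d}. (if z div d = j then 0 else Re (M $$ (z,z))) = 0"
    using sum_nonneg_eq_0_iff[of "{..<k*d}" "\<lambda>z. if z div d = j then 0 else Re (M $$ (z,z))"] nonneg by simp
  have "(if x div d = j then 0 else Re (M $$ (x,x))) = 0" using bspec[OF all0] xy(1) by simp
  then have "Re (M $$ (x,x)) = 0" using x by simp
  then have "M $$ (x,x) = 0" using psd_diag_nonneg[OF p xy(1)] by (simp add: less_eq_complex_def complex_eq_iff)
  then show ?thesis using psd_zero_diag_imp_zero[OF p xy] by simp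
qed

lemma ptrace_B_eq_diag_block:
  assumes j: "j < k" and zero: "\<And>x y. x < k*d \<Longrightarrow> y < k*d \<Longrightarrow> x div d \<noteq> j \<Longrightarrow> M $$ (x,y) = 0"
  shows "ptrace_B k d M = diag_block d j M"
proof (rule eq_matI)
  fix a1 a2 assume "a1 < dim_row (diag_block d j M)" "a2 < dim_col (diag_block d j M)"
  then have a: "a1 < d" "a2 < d" by auto
  have "(\<Sum>b<k. M $$ (b*d+a1, b*d+a2)) = (\<Sum>b<k. if b = j then M $$ (j*d+a1, j*d+a2) else 0)"
    using a zero block_index_less by (intro sum.cong refl) auto
  then show "ptrace_B k d M $$ (a1,a2) = diag_block d j M $$ (a1,a2)"
    using a j unfolding ptrace_B_def by simp
qed (auto simp: ptrace_B_def)

lemma index_apply_channel_fourier_proj: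
  assumes "\<forall>K\<in>set Ks. K \<in> carrier_mat m d" "x < m" "y < m"
  shows "apply_channel m Ks (fourier_proj d S) $$ (x,y) = (\<Sum>i\<in>S. apply_channel m Ks (fourier_proj d {i}) $$ (x,y))"
  using assms by (simp add: index_apply_channel fourier_proj_def kraus_entry_sum[symmetric] cong: kraus_entry_cong)

locale perfect_MIO_discrimination =
  fixes d k :: nat and Ks :: "complex mat list"
  assumes MIO: "is_MIO d (k*d) Ks" and k: "1 \<le> k" "k \<le> d"
    and perfect: "(\<Sum>j<k. 1 / real k * Re (proj_B_trace d j (apply_channel (k*d) Ks (fourier_proj d {j})))) = 1"
begin

abbreviation chan :: "complex mat \<Rightarrow> complex mat" where
  "chan \<equiv> apply_channel (k*d) Ks"

lemma channel: "is_channel d (k*d) Ks"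
  using MIO unfolding is_MIO_def by simp

lemma kraus_carrier: "\<forall>K\<in>set Ks. K \<in> carrier_mat (k*d) d"
  using channel unfolding is_channel_def by simp

lemma density_chan: "j < d \<Longrightarrow> density (k*d) (chan (fourier_proj d {j}))"
  using density_apply_channel[OF channel density_fourier_proj_single] .

lemma proj_B_trace_chan:
  assumes j: "j < k"
  shows "Re (proj_B_trace d j (chan (fourier_proj d {j}))) = 1"
proof -
  have le: "\<And>i. i \<in> {..<k} \<Longrightarrow> 0 \<le> 1 - Re (proj_B_trace d i (chan (fourier_proj d {i})))"
    using proj_B_trace_le_one[OF density_chan] k by auto
  have "1 / real k * (\<Sum>i<k. Re (proj_B_trace d i (chan (fourier_proj d {i})))) = 1"
    using perfect by (simp add: sum_distrib_left)
  then have "(\<Sum>i<k. Re (proj_B_trace d i (chan (fourier_proj d {i})))) = real k"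
    using k by (simp add: field_simps)
  then have "(\<Sum>i<k. 1 - Re (proj_B_trace d i (chan (fourier_proj d {i})))) = 0"
    by (simp add: sum_subtractf)
  then show ?thesis
    using sum_nonneg_eq_0_iff[of "{..<k}" "\<lambda>i. 1 - Re (proj_B_trace d i (chan (fourier_proj d {i})))"] le j by simp
qed

lemma chan_vanishes_off_block:
  assumes i: "i < k" and xy: "x < k*d" "y < k*d" and x: "x div d \<noteq> i"
  shows "chan (fourier_proj d {i}) $$ (x,y) = 0"
proof -
  have "i < d" using i k by simp
  then show ?thesis
    using density_concentrated_on_block[OF density_chan i proj_B_trace_chan[OF i] xy x] by simp
qed

lemma ptrace_B_chan:
  assumes j: "j < k"
  shows "ptrace_B k d (chan (fourier_proj d {j})) = diag_block d j (chan (fourier_proj d {j}))"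
  using chan_vanishes_off_block[OF j] by (rule ptrace_B_eq_diag_block[OF j])

lemma diagonal_chan_one: "diagonal_mat (chan (1\<^sub>m d))"
proof -
  have "incoherent d (mat d d (\<lambda>(a,b). if a = b then 1 / of_nat d else 0))"
    using k by (intro incoherent_diagonalI) (auto simp: less_eq_complex_def)
  moreover have "mat d d (\<lambda>(a,b). if a = b then 1 / of_nat d else 0) = complex_of_real (1 / real d) \<cdot>\<^sub>m 1\<^sub>m d"
    by (rule eq_matI) auto
  ultimately have diag: "diagonal_mat (chan (complex_of_real (1 / real d) \<cdot>\<^sub>m 1\<^sub>m d))"
    using MIO unfolding is_MIO_def incoherent_def by metis
  moreover have "chan (complex_of_real (1 / real d) \<cdot>\<^sub>m 1\<^sub>m d) = complex_of_real (1 / real d) \<cdot>\<^sub>m chan (1\<^sub>m d)"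
    by (rule apply_channel_smult[OF kraus_carrier one_carrier_mat])
  ultimately show ?thesis
    using k apply_channel_carrier[OF kraus_carrier one_carrier_mat] unfolding diagonal_mat_def by auto
qed

lemma diag_block_chan_one:
  assumes j: "j < k"
  shows "diag_block d j (chan (1\<^sub>m d)) = diag_block d j (chan (fourier_proj d {j})) + diag_block d j (chan (fourier_proj d {k..<d}))"
proof (rule eq_matI)
  fix a1 a2 assume "a1 < dim_row (diag_block d j (chan (fourier_proj d {j})) + diag_block d j (chan (fourier_proj d {k..<d})))"
    "a2 < dim_col (diag_block d j (chan (fourier_proj d {j})) + diag_block d j (chan (fourier_proj d {k..<d})))"
  then have a: "a1 < d" "a2 < d" by auto
  define x y where "x = j*d+a1" and "y = j*d+a2"
  have xy: "x < k*d" "y < k*d" unfolding x_def y_def using block_index_less[OF j] a by auto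
  have "chan (1\<^sub>m d) $$ (x,y) = (\<Sum>i<d. chan (fourier_proj d {i}) $$ (x,y))"
    using index_apply_channel_fourier_proj[OF kraus_carrier xy, of "{..<d}"] by (simp add: fourier_proj_lessThan)
  also have "\<dots> = (\<Sum>i<k. chan (fourier_proj d {i}) $$ (x,y)) + (\<Sum>i\<in>{k..<d}. chan (fourier_proj d {i}) $$ (x,y))"
    using k by (simp add: lessThan_atLeast0 sum.atLeastLessThan_concat)
  also have "(\<Sum>i<k. chan (fourier_proj d {i}) $$ (x,y)) = (\<Sum>i<k. if i = j then chan (fourier_proj d {j}) $$ (x,y) else 0)"
    using chan_vanishes_off_block xy a unfolding x_def by (intro sum.cong refl) auto
  also have "(\<Sum>i\<in>{k..<d}. chan (fourier_proj d {i}) $$ (x,y)) = chan (fourier_proj d {k..<d}) $$ (x,y)"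
    by (rule index_apply_channel_fourier_proj[OF kraus_carrier xy, symmetric])
  finally show "diag_block d j (chan (1\<^sub>m d)) $$ (a1,a2) =
    (diag_block d j (chan (fourier_proj d {j})) + diag_block d j (chan (fourier_proj d {k..<d}))) $$ (a1,a2)"
    using a j unfolding x_def y_def by simp
qed auto

lemma robustness_feasible_chan:
  assumes j: "j < k"
  shows "robustness_feasible d (ptrace_B k d (chan (fourier_proj d {j}))) (Re (proj_B_trace d j (chan (1\<^sub>m d))) - 1)"
proof -
  define \<sigma> B where "\<sigma> = diag_block d j (chan (fourier_proj d {j}))"
    and "B = diag_block d j (chan (fourier_proj d {k..<d}))"
  have \<sigma>_psd: "psd d \<sigma>" and B: "psd d B"
    unfolding \<sigma>_def B_def using j k
    by (auto intro!: psd_diag_block psd_apply_channel[OF kraus_carrier] psd_fourier_proj)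
  have tr\<sigma>: "Re (mtrace \<sigma>) = 1" using proj_B_trace_chan[OF j] unfolding \<sigma>_def proj_B_trace_eq_mtrace .
  moreover have "0 \<le> mtrace \<sigma>" using \<sigma>_psd by (rule psd_mtrace_nonneg)
  ultimately have "mtrace \<sigma> = 1" by (simp add: less_eq_complex_def complex_eq_iff)
  then have \<sigma>: "density d \<sigma>" using \<sigma>_psd unfolding density_def by simp
  have sum: "\<sigma> + B = diag_block d j (chan (1\<^sub>m d))" unfolding \<sigma>_def B_def using diag_block_chan_one[OF j] by simp
  have "diagonal_mat (diag_block d j (chan (1\<^sub>m d)))"
    using diagonal_chan_one block_index_less[OF j] apply_channel_carrier[OF kraus_carrier one_carrier_mat]
    unfolding diagonal_mat_def by auto
  then have "robustness_feasible d \<sigma> (Re (mtrace B))"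
    using robustness_feasible_diagonal_completion[OF \<sigma> B] sum by simp
  moreover have "mtrace (\<sigma> + B) = mtrace \<sigma> + mtrace B" by (simp add: mtrace_add[of _ d] \<sigma>_def B_def)
  then have "Re (mtrace B) = Re (proj_B_trace d j (chan (1\<^sub>m d))) - 1"
    using sum tr\<sigma> by (simp add: proj_B_trace_eq_mtrace)
  moreover have "ptrace_B k d (chan (fourier_proj d {j})) = \<sigma>" unfolding \<sigma>_def by (rule ptrace_B_chan[OF j])
  ultimately show ?thesis by simp
qed

lemma robustness_chan_le:
  "j < k \<Longrightarrow> robustness d (ptrace_B k d (chan (fourier_proj d {j}))) \<le> Re (proj_B_trace d j (chan (1\<^sub>m d))) - 1"
  using robustness_le[OF robustness_feasible_chan] .

lemma average_robustness_le:
  "(\<Sum>j<k. 1 / real k * robustness d (ptrace_B k d (chan (fourier_proj d {j})))) \<le> (real d - real k) / real k"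
proof -
  have "(\<Sum>j<k. 1 / real k * robustness d (ptrace_B k d (chan (fourier_proj d {j})))) \<le>
        (\<Sum>j<k. 1 / real k * (Re (proj_B_trace d j (chan (1\<^sub>m d))) - 1))"
    using robustness_chan_le k by (intro sum_mono mult_left_mono) auto
  also have "\<dots> = 1 / real k * (Re (\<Sum>j<k. proj_B_trace d j (chan (1\<^sub>m d))) - real k)"
    by (simp add: sum_subtractf flip: sum_divide_distrib)
  also have "(\<Sum>j<k. proj_B_trace d j (chan (1\<^sub>m d))) = mtrace (1\<^sub>m d)"
    using apply_channel_carrier[OF kraus_carrier one_carrier_mat]
    by (simp add: sum_proj_B_trace mtrace_apply_channel[OF channel])
  finally show ?thesis using k by (simp add: mtrace_def field_simps)
qed

end

section \<open>Lower bound: a channel attaining the bound\<close>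

locale fourier_witness =
  fixes d k :: nat
  assumes k: "1 \<le> k" "k \<le> d"
begin

lemma d_pos: "d > 0"
  using k by simp

text \<open>For \<open>d = 1\<close> (hence \<open>k = 1\<close>) numerator and denominator vanish and the weight is \<open>0\<close>.\<close>

definition plus_weight :: real where
  "plus_weight = (real d - real k) / (real k * (real d - 1))"

definition spread_weight :: real where
  "spread_weight = 1 / (real k * (real d - 1))"

definition fourier_weight :: "nat \<Rightarrow> real" where
  "fourier_weight f = (1 - plus_weight) / real d + (if f = 0 then plus_weight else 0)"

definition kraus_weight :: "nat \<Rightarrow> nat \<Rightarrow> nat \<Rightarrow> real" where
  "kraus_weight i j f = (if i < k then (if j = i then fourier_weight f else 0) else (if f = 0 then 0 else spread_weight))"

text \<open>The Kraus operator \<open>\<surd>(w i j f) |j\<rangle>\<^sub>B H|f\<rangle> \<langle>i|H\<^sup>\<dagger>\<close>: measure in the Fourier basis and, on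
  outcome \<open>i\<close>, prepare \<open>|j\<rangle>\<^sub>B H|f\<rangle>\<close> with probability \<open>w i j f\<close>.\<close>

definition witness_kraus :: "nat \<Rightarrow> nat \<Rightarrow> nat \<Rightarrow> complex mat" where
  "witness_kraus i j f = mat (k*d) d (\<lambda>(x,a). complex_of_real (sqrt (kraus_weight i j f)) *
     (if x div d = j then fourier_vec d f (x mod d) else 0) * cnj (fourier_vec d i a))"

definition witness_channel :: "complex mat list" where
  "witness_channel = concat (map (\<lambda>i. concat (map (\<lambda>j. map (\<lambda>f. witness_kraus i j f) [0..<d]) [0..<k])) [0..<d])"

lemma sum_list_witness_channel:
  "(\<Sum>K\<leftarrow>witness_channel. g K) = (\<Sum>i<d. \<Sum>j<k. \<Sum>f<d. g (witness_kraus i j f))"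
  unfolding witness_channel_def by (simp add: sum_list_concat_map comp_def sum_list_map_upt)

lemma witness_kraus_carrier: "\<forall>K\<in>set witness_channel. K \<in> carrier_mat (k*d) d"
  unfolding witness_channel_def witness_kraus_def by auto

lemma plus_weight_nonneg: "plus_weight \<ge> 0"
  unfolding plus_weight_def using k by (intro divide_nonneg_nonneg mult_nonneg_nonneg) auto

lemma plus_weight_mult: "plus_weight * (real d - 1) = (real d - real k) / real k"
  using k unfolding plus_weight_def by (cases "d = 1") auto

lemma plus_weight_le_one: "plus_weight \<le> 1"
proof (cases "d = 1")
  case False
  then have "real d - 1 > 0" using d_pos by simp
  moreover have "real d - real k \<le> real k * (real d - 1)"
    using k mult_right_mono[of 1 "real k" "real d"] by (simp add: algebra_simps)
  ultimately show ?thesis unfolding plus_weight_def using k by (simp add: divide_le_eq_1)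
qed (unfold plus_weight_def, simp)

lemma fourier_weight_plus_weight: "(1 - plus_weight) / real d + plus_weight = 1 / real k"
proof -
  have "(1 - plus_weight) / real d + plus_weight = (1 + plus_weight * (real d - 1)) / real d"
    using d_pos by (simp add: field_simps)
  also have "\<dots> = 1 / real k" unfolding plus_weight_mult using k d_pos by (simp add: field_simps)
  finally show ?thesis .
qed

lemma kraus_weight_nonneg: "kraus_weight i j f \<ge> 0"
  using plus_weight_le_one plus_weight_nonneg k
  unfolding kraus_weight_def fourier_weight_def spread_weight_def by auto

lemma sum_kraus_weight_outputs:
  assumes i: "i < d"
  shows "(\<Sum>j<k. \<Sum>f<d. kraus_weight i j f) = 1"
proof (cases "i < k")
  case True
  have "(\<Sum>j<k. \<Sum>f<d. kraus_weight i j f) = (\<Sum>j<k. if j = i then (\<Sum>f<d. fourier_weight f) else 0)"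
    using True by (intro sum.cong refl) (auto simp: kraus_weight_def)
  also have "\<dots> = 1"
    using True d_pos unfolding fourier_weight_def by (simp add: sum.distrib)
  finally show ?thesis .
next
  case False
  then have d1: "real d - 1 > 0" using i k by simp
  have "(\<Sum>f<d. if f = 0 then 0 else spread_weight) = (\<Sum>f<d. spread_weight) - (\<Sum>f<d. if f = 0 then spread_weight else 0)"
    by (subst sum_subtractf[symmetric]) (intro sum.cong refl, auto)
  also have "\<dots> = (real d - 1) * spread_weight" using d_pos by (simp add: algebra_simps)
  finally show ?thesis
    using False d1 k unfolding kraus_weight_def spread_weight_def by simp
qed

lemma sum_kraus_weight_inputs:
  assumes j: "j < k"
  shows "(\<Sum>i<d. kraus_weight i j f) = 1 / real k"
proof -
  have "(\<Sum>i<d. kraus_weight i j f) = (\<Sum>i<k. kraus_weight i j f) + (\<Sum>i\<in>{k..<d}. kraus_weight i j f)"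
    using k by (simp add: lessThan_atLeast0 sum.atLeastLessThan_concat)
  also have "(\<Sum>i<k. kraus_weight i j f) = (\<Sum>i<k. if i = j then fourier_weight f else 0)"
    by (intro sum.cong refl) (auto simp: kraus_weight_def)
  also have "\<dots> = fourier_weight f" using j by simp
  also have "(\<Sum>i\<in>{k..<d}. kraus_weight i j f) = (real d - real k) * (if f = 0 then 0 else spread_weight)"
    using k by (simp add: kraus_weight_def of_nat_diff)
  also have "fourier_weight f + (real d - real k) * (if f = 0 then 0 else spread_weight) =
             (1 - plus_weight) / real d + plus_weight"
    unfolding fourier_weight_def plus_weight_def spread_weight_def by auto
  finally show ?thesis using fourier_weight_plus_weight by simp
qed

lemma sqrt_kraus_weight_mult_cnj:
  "complex_of_real (sqrt (kraus_weight i j f)) * cnj (complex_of_real (sqrt (kraus_weight i j f))) =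
   complex_of_real (kraus_weight i j f)"
  using kraus_weight_nonneg by (simp flip: of_real_mult)

lemma index_witness_kraus:
  "x < k*d \<Longrightarrow> a < d \<Longrightarrow> witness_kraus i j f $$ (x,a) =
   complex_of_real (sqrt (kraus_weight i j f)) * (if x div d = j then fourier_vec d f (x mod d) else 0) * cnj (fourier_vec d i a)"
  unfolding witness_kraus_def by simp

lemma witness_kraus_completeness_term:
  assumes a: "a < d" and b: "b < d" and j: "j < k" and f: "f < d"
  shows "(\<Sum>x<k*d. cnj (witness_kraus i j f $$ (x,a)) * witness_kraus i j f $$ (x,b)) =
    complex_of_real (kraus_weight i j f) * (fourier_vec d i a * cnj (fourier_vec d i b))"
proof -
  have "(\<Sum>x<k*d. cnj (witness_kraus i j f $$ (x,a)) * witness_kraus i j f $$ (x,b)) =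
    (\<Sum>x<k*d. if x div d = j then complex_of_real (kraus_weight i j f) * (fourier_vec d i a * cnj (fourier_vec d i b)) *
                  (fourier_vec d f (x mod d) * cnj (fourier_vec d f (x mod d))) else 0)"
  proof (intro sum.cong refl)
    fix x assume "x \<in> {..<k*d}"
    then have x: "x < k*d" by simp
    show "cnj (witness_kraus i j f $$ (x,a)) * witness_kraus i j f $$ (x,b) =
      (if x div d = j then complex_of_real (kraus_weight i j f) * (fourier_vec d i a * cnj (fourier_vec d i b)) *
         (fourier_vec d f (x mod d) * cnj (fourier_vec d f (x mod d))) else 0)"
      unfolding index_witness_kraus[OF x a] index_witness_kraus[OF x b] using sqrt_kraus_weight_mult_cnj[of i j f]
      by (simp add: mult_ac)
  qed
  also have "\<dots> = (\<Sum>a'<d. complex_of_real (kraus_weight i j f) * (fourier_vec d i a * cnj (fourier_vec d i b)) *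
                          (fourier_vec d f a' * cnj (fourier_vec d f a')))"
    using j by (simp add: sum_block)
  also have "\<dots> = complex_of_real (kraus_weight i j f) * (fourier_vec d i a * cnj (fourier_vec d i b))"
    using fourier_vec_orthonormal[OF f f] by (simp flip: sum_distrib_left)
  finally show ?thesis .
qed

lemma witness_is_channel: "is_channel d (k*d) witness_channel"
proof -
  have "foldr (\<lambda>K acc. mat_adjoint K * K + acc) witness_channel (0\<^sub>m d d) $$ (a,b) = 1\<^sub>m d $$ (a,b)"
    if ab: "a < d" "b < d" for a b
  proof -
    have "foldr (\<lambda>K acc. mat_adjoint K * K + acc) witness_channel (0\<^sub>m d d) $$ (a,b) =
      (\<Sum>K\<leftarrow>witness_channel. \<Sum>x<k*d. cnj (K $$ (x,a)) * K $$ (x,b))"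
      using index_kraus_sum[OF witness_kraus_carrier] ab by blast
    also have "\<dots> = (\<Sum>i<d. \<Sum>j<k. \<Sum>f<d. complex_of_real (kraus_weight i j f) * (fourier_vec d i a * cnj (fourier_vec d i b)))"
      unfolding sum_list_witness_channel using ab by (intro sum.cong refl) (simp add: witness_kraus_completeness_term)
    also have "\<dots> = (\<Sum>i<d. complex_of_real (\<Sum>j<k. \<Sum>f<d. kraus_weight i j f) * (fourier_vec d i a * cnj (fourier_vec d i b)))"
      by (simp add: sum_distrib_right)
    also have "\<dots> = 1\<^sub>m d $$ (a,b)"
      using ab by (simp add: sum_kraus_weight_outputs fourier_vec_complete)
    finally show ?thesis .
  qed
  then show ?thesis
    using index_kraus_sum[OF witness_kraus_carrier] witness_kraus_carrier
    unfolding is_channel_def by (auto intro!: eq_matI)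
qed

lemma kraus_entry_witness_kraus:
  assumes x: "x < k*d" and y: "y < k*d"
  shows "(\<Sum>a<d. \<Sum>b<d. witness_kraus i j f $$ (x,a) * F a b * cnj (witness_kraus i j f $$ (y,b))) =
    complex_of_real (kraus_weight i j f) *
    ((if x div d = j then fourier_vec d f (x mod d) else 0) * cnj (if y div d = j then fourier_vec d f (y mod d) else 0)) *
    qform d (mat d d (\<lambda>(a,b). F a b)) (fourier_vec d i)"
proof -
  have "(\<Sum>a<d. \<Sum>b<d. witness_kraus i j f $$ (x,a) * F a b * cnj (witness_kraus i j f $$ (y,b))) =
    (\<Sum>a<d. \<Sum>b<d. (complex_of_real (sqrt (kraus_weight i j f)) * cnj (complex_of_real (sqrt (kraus_weight i j f)))) *
       ((if x div d = j then fourier_vec d f (x mod d) else 0) * cnj (if y div d = j then fourier_vec d f (y mod d) else 0)) *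
       (cnj (fourier_vec d i a) * F a b * fourier_vec d i b))"
    using x y by (intro sum.cong refl) (simp add: index_witness_kraus mult_ac)
  also have "\<dots> = complex_of_real (kraus_weight i j f) *
    ((if x div d = j then fourier_vec d f (x mod d) else 0) * cnj (if y div d = j then fourier_vec d f (y mod d) else 0)) *
    qform d (mat d d (\<lambda>(a,b). F a b)) (fourier_vec d i)"
    unfolding sqrt_kraus_weight_mult_cnj qform_def by (simp add: sum_distrib_left)
  finally show ?thesis .
qed

lemma index_witness_apply:
  assumes \<rho>: "\<rho> \<in> carrier_mat d d" and x: "x < k*d" and y: "y < k*d"
  shows "apply_channel (k*d) witness_channel \<rho> $$ (x,y) = (if x div d = y div d then
     (\<Sum>i<d. \<Sum>f<d. complex_of_real (kraus_weight i (x div d) f) *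
        (fourier_vec d f (x mod d) * cnj (fourier_vec d f (y mod d))) * qform d \<rho> (fourier_vec d i)) else 0)"
proof -
  have xk: "x div d < k" using x by (simp add: less_mult_imp_div_less)
  have \<rho>_mat: "mat d d (\<lambda>(a,b). \<rho> $$ (a,b)) = \<rho>" using \<rho> by (intro eq_matI) auto
  have "apply_channel (k*d) witness_channel \<rho> $$ (x,y) = (\<Sum>i<d. \<Sum>f<d. \<Sum>j<k.
     complex_of_real (kraus_weight i j f) *
     ((if x div d = j then fourier_vec d f (x mod d) else 0) * cnj (if y div d = j then fourier_vec d f (y mod d) else 0)) *
     qform d \<rho> (fourier_vec d i))"
    unfolding index_apply_channel[OF witness_kraus_carrier \<rho> x y] kraus_entry_def sum_list_witness_channel
      kraus_entry_witness_kraus[OF x y] \<rho>_mat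
    by (intro sum.cong refl sum.swap)
  also have "\<dots> = (\<Sum>i<d. \<Sum>f<d. \<Sum>j<k. if j = x div d then (if x div d = y div d then
     complex_of_real (kraus_weight i (x div d) f) * (fourier_vec d f (x mod d) * cnj (fourier_vec d f (y mod d))) *
     qform d \<rho> (fourier_vec d i) else 0) else 0)"
    by (intro sum.cong refl) auto
  finally show ?thesis using xk by auto
qed

definition witness_state :: "complex mat" where
  "witness_state = mat d d (\<lambda>(a,b). complex_of_real ((if a = b then (1 - plus_weight) / real d else 0) + plus_weight / real d))"

lemma witness_state_carrier: "witness_state \<in> carrier_mat d d"
  unfolding witness_state_def by simp

lemma mtrace_witness_state: "mtrace witness_state = 1"
  using d_pos by (simp add: mtrace_def witness_state_def field_simps)

lemma witness_state_entry_sum: "Re (\<Sum>a<d. \<Sum>b<d. witness_state $$ (a,b)) - 1 = (real d - real k) / real k"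
proof -
  have "Re (\<Sum>a<d. \<Sum>b<d. witness_state $$ (a,b)) = (1 - plus_weight) + real d * plus_weight"
    using d_pos by (simp add: witness_state_def sum.distrib)
  then show ?thesis using plus_weight_mult by (simp add: algebra_simps)
qed

lemma witness_output_block:
  assumes j: "j < k" and a: "a1 < d" "a2 < d"
  shows "apply_channel (k*d) witness_channel (fourier_proj d {j}) $$ (j*d+a1, j*d+a2) = witness_state $$ (a1,a2)"
proof -
  have jd: "j < d" using j k by simp
  have x: "j*d+a1 < k*d" and y: "j*d+a2 < k*d" using block_index_less[OF j] a by auto
  have "apply_channel (k*d) witness_channel (fourier_proj d {j}) $$ (j*d+a1, j*d+a2) =
     (\<Sum>i<d. (\<Sum>f<d. complex_of_real (kraus_weight i j f) * (fourier_vec d f a1 * cnj (fourier_vec d f a2))) *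
             (if i = j then 1 else 0))"
    unfolding index_witness_apply[OF fourier_proj_carrier x y] using a jd
    by (simp add: qform_fourier_proj sum_distrib_right)
  also have "\<dots> = (\<Sum>f<d. complex_of_real (fourier_weight f) * (fourier_vec d f a1 * cnj (fourier_vec d f a2)))"
    using j jd by (simp add: sum_mult_if_eq kraus_weight_def)
  also have "\<dots> = (\<Sum>f<d. complex_of_real ((1 - plus_weight) / real d) * (fourier_vec d f a1 * cnj (fourier_vec d f a2)) +
      (if f = 0 then complex_of_real plus_weight * (fourier_vec d 0 a1 * cnj (fourier_vec d 0 a2)) else 0))"
    by (intro sum.cong refl) (simp add: fourier_weight_def distrib_right)
  also have "\<dots> = complex_of_real ((1 - plus_weight) / real d) * (\<Sum>f<d. fourier_vec d f a1 * cnj (fourier_vec d f a2)) +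
      complex_of_real plus_weight * (fourier_vec d 0 a1 * cnj (fourier_vec d 0 a2))"
    using d_pos by (simp add: sum.distrib sum_distrib_left)
  also have "\<dots> = witness_state $$ (a1,a2)"
    using a unfolding witness_state_def by (simp add: fourier_vec_complete fourier_vec_0_mult_cnj of_real_add)
  finally show ?thesis .
qed

lemma witness_apply_incoherent:
  assumes \<rho>: "incoherent d \<rho>" and x: "x < k*d" and y: "y < k*d"
  shows "apply_channel (k*d) witness_channel \<rho> $$ (x,y) = (if x = y then 1 / of_nat (k*d) else 0)"
proof -
  have \<rho>c: "\<rho> \<in> carrier_mat d d" using \<rho> unfolding incoherent_def by (simp add: density_carrier)
  have xk: "x div d < k" using x by (simp add: less_mult_imp_div_less)
  have "(\<Sum>i<d. \<Sum>f<d. complex_of_real (kraus_weight i (x div d) f) *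
           (fourier_vec d f (x mod d) * cnj (fourier_vec d f (y mod d))) * (1 / of_nat d)) =
        (\<Sum>f<d. complex_of_real (\<Sum>i<d. kraus_weight i (x div d) f) *
           (fourier_vec d f (x mod d) * cnj (fourier_vec d f (y mod d))) * (1 / of_nat d))"
    by (subst sum.swap) (simp add: sum_distrib_right sum_divide_distrib)
  also have "\<dots> = (\<Sum>f<d. fourier_vec d f (x mod d) * cnj (fourier_vec d f (y mod d))) / (of_nat k * of_nat d)"
    by (simp add: sum_kraus_weight_inputs[OF xk] sum_divide_distrib)
  finally have "apply_channel (k*d) witness_channel \<rho> $$ (x,y) = (if x div d = y div d then
     (\<Sum>f<d. fourier_vec d f (x mod d) * cnj (fourier_vec d f (y mod d))) / (of_nat k * of_nat d) else 0)"
    unfolding index_witness_apply[OF \<rho>c x y] qform_incoherent_fourier_vec[OF \<rho>]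
    by (cases "x div d = y div d") auto
  also have "\<dots> = (if x = y then 1 / of_nat (k*d) else 0)"
  proof -
    have "x = y \<longleftrightarrow> x div d = y div d \<and> x mod d = y mod d"
      using div_mult_mod_eq[of x d] div_mult_mod_eq[of y d] by metis
    then show ?thesis using fourier_vec_complete d_pos by auto
  qed
  finally show ?thesis .
qed

lemma witness_is_MIO: "is_MIO d (k*d) witness_channel"
proof -
  have "incoherent (k*d) (apply_channel (k*d) witness_channel \<rho>)" if \<rho>: "incoherent d \<rho>" for \<rho>
  proof -
    have "\<rho> \<in> carrier_mat d d" using \<rho> unfolding incoherent_def by (simp add: density_carrier)
    then have "apply_channel (k*d) witness_channel \<rho> = mat (k*d) (k*d) (\<lambda>(x,y). if x = y then 1 / of_nat (k*d) else 0)"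
      using apply_channel_carrier[OF witness_kraus_carrier] witness_apply_incoherent[OF \<rho>]
      by (intro eq_matI) auto
    moreover have "incoherent (k*d) (mat (k*d) (k*d) (\<lambda>(x,y). if x = y then 1 / of_nat (k*d) else 0))"
      using d_pos k by (intro incoherent_diagonalI) (auto simp: less_eq_complex_def)
    ultimately show ?thesis by simp
  qed
  then show ?thesis unfolding is_MIO_def using witness_is_channel by simp
qed

lemma witness_perfect:
  "(\<Sum>j<k. 1 / real k * Re (proj_B_trace d j (apply_channel (k*d) witness_channel (fourier_proj d {j})))) = 1"
proof -
  have "proj_B_trace d j (apply_channel (k*d) witness_channel (fourier_proj d {j})) = 1" if j: "j < k" for j
    using mtrace_witness_state witness_state_carrier
    by (simp add: proj_B_trace_def witness_output_block[OF j] mtrace_eq_sum)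
  then show ?thesis using k by simp
qed

sublocale witness: perfect_MIO_discrimination d k witness_channel
  using witness_is_MIO k witness_perfect by unfold_locales

lemma robustness_witness_ge:
  assumes j: "j < k"
  shows "(real d - real k) / real k \<le> robustness d (ptrace_B k d (apply_channel (k*d) witness_channel (fourier_proj d {j})))"
proof -
  have \<sigma>: "ptrace_B k d (apply_channel (k*d) witness_channel (fourier_proj d {j})) = witness_state"
    unfolding witness.ptrace_B_chan[OF j]
    by (rule eq_matI) (simp_all add: witness_output_block[OF j] witness_state_def)
  have "robustness_feasible d witness_state (Re (proj_B_trace d j (apply_channel (k*d) witness_channel (1\<^sub>m d))) - 1)"
    using witness.robustness_feasible_chan[OF j] unfolding \<sigma> .
  from robustness_ge_entry_sum[OF witness_state_carrier mtrace_witness_state this]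
  show ?thesis unfolding \<sigma> witness_state_entry_sum .
qed

end

section \<open>Entropy of the average state\<close>

lemma similar_mat_fourier_diagonal:
  "similar_mat (mat d d (\<lambda>(a,b). \<Sum>m<d. c m * (fourier_vec d m a * cnj (fourier_vec d m b))))
               (mat d d (\<lambda>(i,j). if i = j then c i else 0))"
proof -
  define D where "D = mat d d (\<lambda>(i,j). if i = j then c i else (0::complex))"
  have carrier: "hadamard d \<in> carrier_mat d d" "mat_adjoint (hadamard d) \<in> carrier_mat d d" "D \<in> carrier_mat d d"
    unfolding D_def by (auto simp: hadamard_carrier mat_adjoint_carrier[OF hadamard_carrier])
  have "mat d d (\<lambda>(a,b). \<Sum>m<d. c m * (fourier_vec d m a * cnj (fourier_vec d m b))) =
        hadamard d * D * mat_adjoint (hadamard d)"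
  proof (rule eq_matI)
    fix a b assume "a < dim_row (hadamard d * D * mat_adjoint (hadamard d))"
      "b < dim_col (hadamard d * D * mat_adjoint (hadamard d))"
    then have ab: "a < d" "b < d" using carrier by auto
    have HD: "(hadamard d * D) $$ (a,m) = c m * fourier_vec d m a" if "m < d" for m
    proof -
      have "(hadamard d * D) $$ (a,m) = (\<Sum>l<d. fourier_vec d l a * (if l = m then c m else 0))"
        using ab that carrier by (subst index_mult_mat_sum[of _ d d]) (auto simp: index_hadamard D_def intro!: sum.cong)
      then show ?thesis using that by (simp add: if_distrib[of "times _"] mult.commute cong: if_cong)
    qed
    have "(hadamard d * D * mat_adjoint (hadamard d)) $$ (a,b) =
          (\<Sum>m<d. (hadamard d * D) $$ (a,m) * cnj (fourier_vec d m b))"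
      using ab carrier by (subst index_mult_mat_sum[of _ d d]) (auto simp: index_hadamard_adjoint intro!: sum.cong)
    then show "mat d d (\<lambda>(a,b). \<Sum>m<d. c m * (fourier_vec d m a * cnj (fourier_vec d m b))) $$ (a,b) =
               (hadamard d * D * mat_adjoint (hadamard d)) $$ (a,b)"
      using ab HD by (simp add: mult.assoc)
  qed (use carrier in auto)
  then have "similar_mat (mat d d (\<lambda>(a,b). \<Sum>m<d. c m * (fourier_vec d m a * cnj (fourier_vec d m b)))) D"
    using carrier hadamard_mult_adjoint adjoint_mult_hadamard
    by (intro similar_matI[where P = "hadamard d" and Q = "mat_adjoint (hadamard d)" and n = d]) auto
  then show ?thesis unfolding D_def .
qed

lemma char_poly_diagonal:
  "char_poly (mat d d (\<lambda>(i,j). if i = j then c i else 0)) = (\<Prod>i<d. [:- c i, 1:])"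
proof -
  have "char_poly (mat d d (\<lambda>(i,j). if i = j then c i else 0)) =
        (\<Prod>a\<leftarrow>diag_mat (mat d d (\<lambda>(i,j). if i = j then c i else 0)). [:- a, 1:])"
    by (rule char_poly_upper_triangular[where n = d]) (auto simp: upper_triangular_def)
  also have "\<dots> = (\<Prod>i<d. [:- c i, 1:])"
    unfolding diag_mat_def by (simp add: prod_list_map_upt comp_def)
  finally show ?thesis .
qed

lemma char_poly_average_fourier_state:
  assumes "1 \<le> k" "k \<le> d"
  shows "char_poly (complex_of_real (1 / real k) \<cdot>\<^sub>m matsum d (\<lambda>j. ket_bra (phi d j)) k) =
         [:- (1 / of_nat k), 1:] ^ k * [:0, 1:] ^ (d - k)"
proof -
  define c where "c m = (if m < k then 1 / of_nat k else (0::complex))" for m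
  have sum_c: "(\<Sum>m<d. c m * z m) = (\<Sum>m<k. z m) / of_nat k" for z :: "nat \<Rightarrow> complex"
  proof -
    have "(\<Sum>m<d. c m * z m) = (\<Sum>m<k. c m * z m) + (\<Sum>m\<in>{k..<d}. c m * z m)"
      using assms by (simp add: lessThan_atLeast0 sum.atLeastLessThan_concat)
    then show ?thesis by (simp add: c_def sum_divide_distrib)
  qed
  have "matsum d (\<lambda>j. ket_bra (phi d j)) k = mat d d (\<lambda>(a,b). \<Sum>j<k. ket_bra (phi d j) $$ (a,b))"
    using assms by (intro matsum_eq_mat) (simp add: ket_bra_phi)
  then have "complex_of_real (1 / real k) \<cdot>\<^sub>m matsum d (\<lambda>j. ket_bra (phi d j)) k =
        mat d d (\<lambda>(a,b). \<Sum>m<d. c m * (fourier_vec d m a * cnj (fourier_vec d m b)))"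
    using assms by (auto simp: sum_c ket_bra_phi fourier_proj_def intro!: eq_matI)
  then have "char_poly (complex_of_real (1 / real k) \<cdot>\<^sub>m matsum d (\<lambda>j. ket_bra (phi d j)) k) = (\<Prod>i<d. [:- c i, 1:])"
    using char_poly_similar[OF similar_mat_fourier_diagonal] by (simp add: char_poly_diagonal)
  also have "\<dots> = (\<Prod>i<k. [:- (1 / of_nat k), 1:]) * (\<Prod>i\<in>{k..<d}. [:0, 1:])"
    using assms unfolding c_def
    by (simp add: lessThan_atLeast0 prod.atLeastLessThan_concat[symmetric, of 0 k d])
  finally show ?thesis by simp
qed

lemma vn_entropy_uniform_spectrum:
  assumes cp: "char_poly A = [:- (1 / of_nat k), 1:] ^ k * [:0, 1:] ^ (d - k)" and k: "1 \<le> k"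
  shows "vn_entropy A = log 2 (real k)"
proof -
  define p where "p = [:- (1 / of_nat k), 1:] ^ k * [:0, 1::complex:] ^ (d - k)"
  have roots: "{z. poly p z = 0} \<subseteq> {1 / of_nat k, 0}" and root: "1 / of_nat k \<in> {z. poly p z = 0}"
    unfolding p_def using k by (auto simp: poly_power)
  have "order (1 / of_nat k) p = order (1 / of_nat k :: complex) ([:- (1 / of_nat k), 1:] ^ k) +
                                 order (1 / of_nat k) ([:0, 1::complex:] ^ (d - k))"
    unfolding p_def by (rule order_mult) simp
  then have ord: "order (1 / of_nat k) p = k" using k by (simp add: order_power_n_n order_linear_power)
  define g where "g z = real (order z p) * (Re z * log 2 (Re z))" for z
  have "(\<Sum>z\<in>{z. poly p z = 0}. g z) = (\<Sum>z\<in>{1 / of_nat k}. g z)"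
    using roots root finite_subset[OF roots] unfolding g_def by (intro sum.mono_neutral_right) auto
  also have "\<dots> = - log 2 (real k)" unfolding g_def using ord k by (simp add: log_divide)
  finally show ?thesis unfolding vn_entropy_def cp p_def[symmetric] g_def by simp
qed

lemma vn_entropy_average_fourier_state:
  "1 \<le> k \<Longrightarrow> k \<le> d \<Longrightarrow>
   vn_entropy (complex_of_real (1 / real k) \<cdot>\<^sub>m matsum d (\<lambda>j. ket_bra (phi d j)) k) = log 2 (real k)"
  by (rule vn_entropy_uniform_spectrum[OF char_poly_average_fourier_state])

lemma C_MIO_fourier_states:
  assumes k: "1 \<le> k" "k \<le> d"
  shows "C_MIO d k (\<lambda>_. 1 / real k) (\<lambda>j. ket_bra (phi d j)) = log 2 (real d / real k)"
proof -
  interpret fourier_witness d k using k by unfold_locales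
  define avg_rob where "avg_rob Ks =
    (\<Sum>j<k. 1 / real k * robustness d (ptrace_B k d (apply_channel (k*d) Ks (fourier_proj d {j}))))" for Ks
  define T where "T = {avg_rob Ks | Ks. is_MIO d (k*d) Ks \<and>
      (\<Sum>j<k. 1 / real k * Re (proj_B_trace d j (apply_channel (k*d) Ks (fourier_proj d {j})))) = 1}"
  have "C_MIO d k (\<lambda>_. 1 / real k) (\<lambda>j. ket_bra (phi d j)) = log 2 (1 + Sup T)"
  proof -
    have e1: "(\<Sum>j<k. 1 / real k * robustness d (ptrace_B k d (apply_channel (k*d) Ks (ket_bra (phi d j))))) =
              (\<Sum>j<k. 1 / real k * robustness d (ptrace_B k d (apply_channel (k*d) Ks (fourier_proj d {j}))))" for Ks
      using k by (intro sum.cong refl) (simp add: ket_bra_phi)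
    have e2: "(\<Sum>j<k. 1 / real k * Re (proj_B_trace d j (apply_channel (k*d) Ks (ket_bra (phi d j))))) =
              (\<Sum>j<k. 1 / real k * Re (proj_B_trace d j (apply_channel (k*d) Ks (fourier_proj d {j}))))" for Ks
      using k by (intro sum.cong refl) (simp add: ket_bra_phi)
    show ?thesis unfolding C_MIO_def T_def avg_rob_def P_suc_fourier_states[OF k] e1 e2 ..
  qed
  moreover have upper: "x \<le> (real d - real k) / real k" if "x \<in> T" for x
  proof -
    obtain Ks where "x = avg_rob Ks" "perfect_MIO_discrimination d k Ks"
      using \<open>x \<in> T\<close> k unfolding T_def perfect_MIO_discrimination_def by blast
    then show ?thesis unfolding avg_rob_def using perfect_MIO_discrimination.average_robustness_le by blast
  qed
  have "(real d - real k) / real k \<in> T"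
  proof -
    have witness_T: "avg_rob witness_channel \<in> T"
      unfolding T_def using witness_is_MIO witness_perfect by blast
    have "(\<Sum>j<k. 1 / real k * ((real d - real k) / real k)) \<le> avg_rob witness_channel"
      unfolding avg_rob_def using robustness_witness_ge k by (intro sum_mono mult_left_mono) auto
    then have "(real d - real k) / real k \<le> avg_rob witness_channel" using k by simp
    then show ?thesis using upper[OF witness_T] witness_T by simp
  qed
  then have "Sup T = (real d - real k) / real k" using upper by (rule cSup_eq_maximum)
  ultimately show ?thesis using k by (simp add: field_simps)
qed

theorem proposition3:
  fixes d k :: nat
  assumes "1 \<le> k" and "k \<le> d"
  shows "C_MIO d k (\<lambda>_. 1 / real k) (\<lambda>j. ket_bra (phi d j))
         + vn_entropy (complex_of_real (1 / real k) \<cdot>\<^sub>m matsum d (\<lambda>j. ket_bra (phi d j)) k)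
         = log 2 (real d)"
proof -
  have "C_MIO d k (\<lambda>_. 1 / real k) (\<lambda>j. ket_bra (phi d j)) = log 2 (real d / real k)"
    by (rule C_MIO_fourier_states[OF assms])
  moreover have "vn_entropy (complex_of_real (1 / real k) \<cdot>\<^sub>m matsum d (\<lambda>j. ket_bra (phi d j)) k) = log 2 (real k)"
    by (rule vn_entropy_average_fourier_state[OF assms])
  ultimately show ?thesis using assms by (simp add: log_divide)
qed

end
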